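(* Let $\mathcal C$ be a VTDAG over a binary signature $\Sigma$, let $m\in\mathbb N$, and let $\bar{\mathcal C}$ (over signature $\bar\Sigma$) be a natural coloring of $\mathcal C$ with respect to $m$. Then for every conjunctive query $\Phi(\bar x,y)$ over $\Sigma$ with $|\bar x|<m$ there exists $n\in\mathbb N$ such that for every element $e$ of $\mathcal C$: $M^{\bar\Sigma}_n(\bar{\mathcal C})\models\exists\bar x\,\Phi(\bar x,q_n(e))$ if and only if $\mathcal C\models\exists\bar x\,\Phi(\bar x,e)$.
   Context: Binary signature: relations of arity at most 2 plus constants; equality atoms $x=c$ allowed in queries. $\mathcal C_{con}$: elements interpreting constants; $\mathcal C_{non}$: the rest. $\mathcal P(e)=\{e\}$ for $e\in\mathcal C_{con}$, and $\mathcal P(e)=\{e\}\cup\{x\in\mathcal C_{non}:\mathcal C\models R(x,e)$ for some binary $R\}$ for $e\in\mathcal C_{non}$. VTDAG: the directed graph on $\mathcal C_{non}$ given by binary atoms is acyclic; for each binary $R$ and $e\in\mathcal C_{non}$ at most one $d\in\mathcal C_{non}$ has $R(d,e)$; for each $e\in\mathcal C_{non}$, any $d,d'\in\mathcal P(e)$ satisfy $d\in\mathcal P(d')$ or $d'\in\mathcal P(d)$. Colors are unary predicates $K^l_h$ (hue $h$, lightness $l$). A coloring of $\mathcal C$ is a structure $\bar{\mathcal C}$ over a finite $\bar\Sigma$ with $\Sigma\subseteq\bar\Sigma\subseteq\Sigma\cup\{K^l_h\}$, restricting to $\mathcal C$ on $\Sigma$, in which each element has exactly one color. $\mathcal P_0(e)=\mathcal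 P(e)$, $\mathcal P_k(e)=\bigcup_{a\in\mathcal P_{k-1}(e)}\mathcal P(a)$. A coloring is natural (w.r.t. $m$) if: whenever $e'\in\mathcal P_m(e)$, $e'\ne e$, $K^l_h(e)$ and $K^{l'}_{h'}(e')$, then $h\ne h'$; and whenever $K^l_h(e)$ and $K^l_{h'}(e')$ (same lightness), the substructures of $\mathcal C$ on $\mathcal P(e)\cup\mathcal C_{con}$ and on $\mathcal P(e')\cup\mathcal C_{con}$ are isomorphic. Positive types $ptp_n(\bar{\mathcal C},e,\bar\Sigma)$: conjunctive queries $\Psi(\bar x,y)$, $|\bar x|<n$, over $\bar\Sigma$, with $\bar{\mathcal C}\models\exists\bar x\Psi(\bar x,e)$; $\equiv_n$ is equality of these types; $M^{\bar\Sigma}_n(\bar{\mathcal C})$ is the quotient by $\equiv_n$ (a tuple of classes is in $R$ iff some representatives are), and $q_n$ the quotient map. *)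

theory Defs
  imports Main
begin

text \<open>A signature is given by a set U of unary relation symbols, a set B of binary
relation symbols and a set Cs of constant symbols.\<close>

record ('e,'u,'b,'c) struc =
  dom  :: "'e set"
  urel :: "'u \<Rightarrow> 'e \<Rightarrow> bool"
  brel :: "'b \<Rightarrow> 'e \<Rightarrow> 'e \<Rightarrow> bool"
  cval :: "'c \<Rightarrow> 'e"

definition struc_wf :: "'u set \<Rightarrow> 'b set \<Rightarrow> 'c set \<Rightarrow> ('e,'u,'b,'c) struc \<Rightarrow> bool" where
  "struc_wf U B Cs A \<longleftrightarrow>
     (\<forall>c\<in>Cs. cval A c \<in> dom A) \<and>
     (\<forall>u\<in>U. \<forall>x. urel A u x \<longrightarrow> x \<in> dom A) \<and>
     (\<forall>R\<in>B. \<forall>x y. brel A R x y \<longrightarrow> x \<in> dom A \<and> y \<in> dom A)"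

text \<open>Variables are natural numbers; variable 0 is the distinguished free variable y,
variables 1..k are the existentially quantified variables x-bar (so |x-bar| = k).\<close>

datatype ('u,'b,'c) atom = UAt 'u nat | BAt 'b nat nat | EqC nat 'c

type_synonym ('u,'b,'c) cq = "nat \<times> ('u,'b,'c) atom list"

fun atom_vars :: "('u,'b,'c) atom \<Rightarrow> nat set" where
  "atom_vars (UAt u x) = {x}"
| "atom_vars (BAt R x y) = {x, y}"
| "atom_vars (EqC x c) = {x}"

fun atom_over :: "'u set \<Rightarrow> 'b set \<Rightarrow> 'c set \<Rightarrow> ('u,'b,'c) atom \<Rightarrow> bool" where
  "atom_over U B Cs (UAt u x) = (u \<in> U)"
| "atom_over U B Cs (BAt R x y) = (R \<in> B)"
| "atom_over U B Cs (EqC x c) = (c \<in> Cs)"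

definition cq_over :: "'u set \<Rightarrow> 'b set \<Rightarrow> 'c set \<Rightarrow> ('u,'b,'c) cq \<Rightarrow> bool" where
  "cq_over U B Cs Q \<longleftrightarrow>
     (\<forall>a\<in>set (snd Q). atom_over U B Cs a \<and> atom_vars a \<subseteq> {0..fst Q})"

fun atom_holds :: "('e,'u,'b,'c) struc \<Rightarrow> (nat \<Rightarrow> 'e) \<Rightarrow> ('u,'b,'c) atom \<Rightarrow> bool" where
  "atom_holds A v (UAt u x) = urel A u (v x)"
| "atom_holds A v (BAt R x y) = brel A R (v x) (v y)"
| "atom_holds A v (EqC x c) = (v x = cval A c)"

definition holds :: "('e,'u,'b,'c) struc \<Rightarrow> ('u,'b,'c) cq \<Rightarrow> 'e \<Rightarrow> bool" where
  "holds A Q e \<longleftrightarrow>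
     (\<exists>v. v 0 = e \<and> (\<forall>i\<in>{1..fst Q}. v i \<in> dom A) \<and> (\<forall>a\<in>set (snd Q). atom_holds A v a))"

definition Ccon :: "'c set \<Rightarrow> ('e,'u,'b,'c) struc \<Rightarrow> 'e set" where
  "Ccon Cs A = cval A ` Cs"

definition Cnon :: "'c set \<Rightarrow> ('e,'u,'b,'c) struc \<Rightarrow> 'e set" where
  "Cnon Cs A = dom A - Ccon Cs A"

definition Pset :: "'b set \<Rightarrow> 'c set \<Rightarrow> ('e,'u,'b,'c) struc \<Rightarrow> 'e \<Rightarrow> 'e set" where
  "Pset B Cs A e =
     (if e \<in> Ccon Cs A then {e}
      else {e} \<union> {x \<in> Cnon Cs A. \<exists>R\<in>B. brel A R x e})"

fun Pk :: "'b set \<Rightarrow> 'c set \<Rightarrow> ('e,'u,'b,'c) struc \<Rightarrow> nat \<Rightarrow> 'e \<Rightarrow> 'e set" where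
  "Pk B Cs A 0 e = Pset B Cs A e"
| "Pk B Cs A (Suc k) e = (\<Union>a\<in>Pk B Cs A k e. Pset B Cs A a)"

definition vtdag :: "'u set \<Rightarrow> 'b set \<Rightarrow> 'c set \<Rightarrow> ('e,'u,'b,'c) struc \<Rightarrow> bool" where
  "vtdag U B Cs A \<longleftrightarrow>
     struc_wf U B Cs A \<and>
     acyclic {(d, e). d \<in> Cnon Cs A \<and> e \<in> Cnon Cs A \<and> (\<exists>R\<in>B. brel A R d e)} \<and>
     (\<forall>R\<in>B. \<forall>e\<in>Cnon Cs A. \<forall>d\<in>Cnon Cs A. \<forall>d'\<in>Cnon Cs A.
         brel A R d e \<and> brel A R d' e \<longrightarrow> d = d') \<and>
     (\<forall>e\<in>Cnon Cs A. \<forall>d\<in>Pset B Cs A e. \<forall>d'\<in>Pset B Cs A e.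
         d \<in> Pset B Cs A d' \<or> d' \<in> Pset B Cs A d)"

definition iso_substr :: "'u set \<Rightarrow> 'b set \<Rightarrow> 'c set \<Rightarrow> ('e,'u,'b,'c) struc \<Rightarrow> 'e set \<Rightarrow> 'e set \<Rightarrow> bool" where
  "iso_substr U B Cs A S T \<longleftrightarrow>
     (\<exists>f. bij_betw f S T \<and>
          (\<forall>u\<in>U. \<forall>x\<in>S. urel A u x \<longleftrightarrow> urel A u (f x)) \<and>
          (\<forall>R\<in>B. \<forall>x\<in>S. \<forall>y\<in>S. brel A R x y \<longleftrightarrow> brel A R (f x) (f y)) \<and>
          (\<forall>c\<in>Cs. f (cval A c) = cval A c))"

text \<open>Colored unary symbols: Inl u for u in Sigma, Inr (h, l) for the
color K^l_h (hue h, lightness l). K is the (finite) set of colors in Sigma-bar.\<close>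

definition coloring ::
  "'u set \<Rightarrow> 'b set \<Rightarrow> 'c set \<Rightarrow> ('e,'u,'b,'c) struc \<Rightarrow> (nat \<times> nat) set
     \<Rightarrow> ('e,'u + nat \<times> nat,'b,'c) struc \<Rightarrow> bool" where
  "coloring U B Cs A K Ab \<longleftrightarrow>
     finite U \<and> finite B \<and> finite Cs \<and> finite K \<and>
     dom Ab = dom A \<and>
     (\<forall>u\<in>U. \<forall>x. urel Ab (Inl u) x = urel A u x) \<and>
     (\<forall>R\<in>B. \<forall>x y. brel Ab R x y = brel A R x y) \<and>
     (\<forall>c\<in>Cs. cval Ab c = cval A c) \<and>
     (\<forall>hl\<in>K. \<forall>x. urel Ab (Inr hl) x \<longrightarrow> x \<in> dom A) \<and>
     (\<forall>e\<in>dom A. \<exists>!hl. hl \<in> K \<and> urel Ab (Inr hl) e)"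

definition natural_coloring ::
  "'u set \<Rightarrow> 'b set \<Rightarrow> 'c set \<Rightarrow> ('e,'u,'b,'c) struc \<Rightarrow> (nat \<times> nat) set
     \<Rightarrow> ('e,'u + nat \<times> nat,'b,'c) struc \<Rightarrow> nat \<Rightarrow> bool" where
  "natural_coloring U B Cs A K Ab m \<longleftrightarrow>
     coloring U B Cs A K Ab \<and>
     (\<forall>e\<in>dom A. \<forall>e'\<in>dom A. \<forall>h l h' l'.
        e' \<in> Pk B Cs A m e \<and> e' \<noteq> e \<and> (h, l) \<in> K \<and> (h', l') \<in> K \<and>
        urel Ab (Inr (h, l)) e \<and> urel Ab (Inr (h', l')) e' \<longrightarrow> h \<noteq> h') \<and>
     (\<forall>e\<in>dom A. \<forall>e'\<in>dom A. \<forall>h h' l.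
        (h, l) \<in> K \<and> (h', l) \<in> K \<and>
        urel Ab (Inr (h, l)) e \<and> urel Ab (Inr (h', l)) e' \<longrightarrow>
        iso_substr U B Cs A (Pset B Cs A e \<union> Ccon Cs A) (Pset B Cs A e' \<union> Ccon Cs A))"

text \<open>Sigma-bar has unary symbols Inl ` U \<union> Inr ` K, binary symbols B, constants Cs.\<close>

definition ptp :: "'u set \<Rightarrow> 'b set \<Rightarrow> 'c set \<Rightarrow> (nat \<times> nat) set \<Rightarrow> nat
    \<Rightarrow> ('e,'u + nat \<times> nat,'b,'c) struc \<Rightarrow> 'e \<Rightarrow> ('u + nat \<times> nat,'b,'c) cq set" where
  "ptp U B Cs K n Ab e =
     {Q. cq_over (Inl ` U \<union> Inr ` K) B Cs Q \<and> fst Q < n \<and> holds Ab Q e}"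

definition qn :: "'u set \<Rightarrow> 'b set \<Rightarrow> 'c set \<Rightarrow> (nat \<times> nat) set \<Rightarrow> nat
    \<Rightarrow> ('e,'u + nat \<times> nat,'b,'c) struc \<Rightarrow> 'e \<Rightarrow> 'e set" where
  "qn U B Cs K n Ab e = {e' \<in> dom Ab. ptp U B Cs K n Ab e' = ptp U B Cs K n Ab e}"

definition quot :: "'u set \<Rightarrow> 'b set \<Rightarrow> 'c set \<Rightarrow> (nat \<times> nat) set \<Rightarrow> nat
    \<Rightarrow> ('e,'u + nat \<times> nat,'b,'c) struc \<Rightarrow> ('e set,'u + nat \<times> nat,'b,'c) struc" where
  "quot U B Cs K n Ab =
     \<lparr> dom = qn U B Cs K n Ab ` dom Ab,
       urel = (\<lambda>u X. \<exists>x\<in>X. urel Ab u x),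
       brel = (\<lambda>R X Y. \<exists>x\<in>X. \<exists>y\<in>Y. brel Ab R x y),
       cval = (\<lambda>c. qn U B Cs K n Ab (cval Ab c)) \<rparr>"

definition lift_cq :: "('u,'b,'c) cq \<Rightarrow> ('u + nat \<times> nat,'b,'c) cq" where
  "lift_cq Q = (fst Q, map (map_atom Inl id id) (snd Q))"

end

theory Submission
  imports Defs
begin

text \<open>A query holds at the class of e in the quotient M_n iff some assignment, with e as the answer,
  satisfies its unary and constant atoms and satisfies each binary atom only up to n-equivalence
  of both ends (a loose assignment). Such an assignment has to be repaired into a genuine one.
  The binary atoms between variables with nonconstant values form a graph, which has no cycle:
  lifting a cycle through genuine parents in C would produce, by the acyclicity of C, an element
  of P_m(e) different from e with the color of e, contradicting naturality. So either there are no
  such edges and the assignment is already genuine, or there is a sink with parents. The parents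
  of a sink are moved to the genuine parents of its value; these are linearly ordered by P and
  have distinct colors. The query without the sink and with the parents that now coincide merged
  has fewer variables and is solved recursively, at a coarser level. The sink is re-attached below
  the lowest new parent by a query describing the positive type of its old value. Each step
  removes a variable and loses a bounded amount of precision, so a fixed n works for all queries
  with fewer than m variables.\<close>

section \<open>Renaming, conjunction and homomorphic images of queries\<close>

fun ren_atom :: "(nat \<Rightarrow> nat) \<Rightarrow> ('u,'b,'c) atom \<Rightarrow> ('u,'b,'c) atom" where
  "ren_atom f (UAt u x) = UAt u (f x)"
| "ren_atom f (BAt R x y) = BAt R (f x) (f y)"
| "ren_atom f (EqC x c) = EqC (f x) c"

lemma atom_holds_ren: "atom_holds A v (ren_atom f a) = atom_holds A (v \<circ> f) a"
  by (cases a) auto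

lemma atom_over_ren: "atom_over U B Cs (ren_atom f a) = atom_over U B Cs a"
  by (cases a) auto

lemma atom_vars_ren: "atom_vars (ren_atom f a) = f ` atom_vars a"
  by (cases a) auto

lemma atom_vars_map_atom: "atom_vars (map_atom f g h a) = atom_vars a"
  by (cases a) auto

lemma finite_atom_vars: "finite (atom_vars a)"
  by (cases a) auto

lemma atom_holds_cong:
  "(\<And>t. t \<in> atom_vars a \<Longrightarrow> v t = v' t) \<Longrightarrow> atom_holds A v a = atom_holds A v' a"
  by (cases a) auto

lemma holds_set_cong:
  "fst Q = fst Q' \<Longrightarrow> set (snd Q) = set (snd Q') \<Longrightarrow> holds S Q y = holds S Q' y"
  unfolding holds_def by auto

text \<open>Unlike the queries of the definitions, whose variables are 0, ..., k, atom lists below have an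
  arbitrary finite set of variables and a distinguished root variable.\<close>

definition qvars :: "('u,'b,'c) atom list \<Rightarrow> nat \<Rightarrow> nat set" where
  "qvars A a = insert a (\<Union> (atom_vars ` set A))"

definition sat :: "('e,'u,'b,'c) struc \<Rightarrow> ('u,'b,'c) atom list \<Rightarrow> nat \<Rightarrow> 'e \<Rightarrow> bool" where
  "sat S A a x \<longleftrightarrow>
     (\<exists>v. v a = x \<and> (\<forall>t\<in>qvars A a. v t \<in> dom S) \<and> (\<forall>at\<in>set A. atom_holds S v at))"

definition atoms_over :: "'u set \<Rightarrow> 'b set \<Rightarrow> 'c set \<Rightarrow> ('u,'b,'c) atom list \<Rightarrow> bool" where
  "atoms_over U B Cs A \<longleftrightarrow> (\<forall>at\<in>set A. atom_over U B Cs at)"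

lemma finite_qvars: "finite (qvars A a)"
  unfolding qvars_def using finite_atom_vars by auto

lemma root_in_qvars: "a \<in> qvars A a"
  unfolding qvars_def by auto

lemma qvars_atom: "at \<in> set A \<Longrightarrow> t \<in> atom_vars at \<Longrightarrow> t \<in> qvars A a"
  unfolding qvars_def by auto

lemma sat_ren:
  assumes "sat S (map (ren_atom f) A) b x" "f a = b"
  shows "sat S A a x"
proof -
  obtain v where v: "v b = x" "\<forall>t\<in>qvars (map (ren_atom f) A) b. v t \<in> dom S"
    "\<forall>at\<in>set A. atom_holds S v (ren_atom f at)"
    using assms unfolding sat_def by auto
  have "f t \<in> qvars (map (ren_atom f) A) b" if "t \<in> qvars A a" for t
    using that assms(2) unfolding qvars_def by (auto simp: atom_vars_ren)
  then show ?thesis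
    unfolding sat_def using v assms(2) by (intro exI[of _ "v \<circ> f"]) (auto simp: atom_holds_ren)
qed

lemma enumeration_from:
  assumes "finite X" "a \<in> X"
  obtains h where "bij_betw h {..<card X} X" "h 0 = a"
proof -
  obtain ys where ys: "distinct ys" "set ys = X - {a}"
    using finite_distinct_list assms(1) by (metis finite_Diff)
  define xs where "xs = a # ys"
  have xs: "distinct xs" "set xs = X" using assms ys unfolding xs_def by auto
  then have "length xs = card X" using distinct_card by metis
  then have "bij_betw ((!) xs) {..<card X} X" using bij_betw_nth xs by metis
  moreover have "xs ! 0 = a" unfolding xs_def by simp
  ultimately show thesis using that by blast
qed

lemma sat_as_cq:
  assumes "atoms_over U B Cs A"
  shows "\<exists>Q. cq_over U B Cs Q \<and> fst Q = card (qvars A a) - 1 \<and>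
           (\<forall>y\<in>dom S. holds S Q y \<longleftrightarrow> sat S A a y)"
proof -
  let ?X = "qvars A a"
  obtain h where h: "bij_betw h {..<card ?X} ?X" "h 0 = a"
    using enumeration_from[OF finite_qvars root_in_qvars] .
  define \<rho> where "\<rho> = inv_into {..<card ?X} h"
  have pos: "0 < card ?X" using finite_qvars root_in_qvars by (metis card_gt_0_iff empty_iff)
  have \<rho>: "bij_betw \<rho> ?X {..<card ?X}"
    unfolding \<rho>_def using h(1) by (rule bij_betw_inv_into)
  have \<rho>_root: "\<rho> a = 0"
    unfolding \<rho>_def using h pos by (metis bij_betw_imp_inj_on inv_into_f_f lessThan_iff)
  have h\<rho>: "h (\<rho> t) = t" if "t \<in> ?X" for t
    unfolding \<rho>_def using that h(1) by (meson bij_betw_inv_into_right)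
  have vars: "atom_vars at \<subseteq> ?X" if "at \<in> set A" for at using that qvars_atom by blast
  let ?Q = "(card ?X - 1, map (ren_atom \<rho>) A)"
  have "cq_over U B Cs ?Q"
    using assms vars bij_betw_apply[OF \<rho>]
    unfolding cq_over_def atoms_over_def by (fastforce simp: atom_over_ren atom_vars_ren)
  moreover have "holds S ?Q y \<longleftrightarrow> sat S A a y" if y: "y \<in> dom S" for y
  proof
    assume "holds S ?Q y"
    then obtain v where v: "v 0 = y" "\<forall>i\<in>{1..card ?X - 1}. v i \<in> dom S"
      "\<forall>at\<in>set A. atom_holds S v (ren_atom \<rho> at)" unfolding holds_def by auto
    have "v (\<rho> t) \<in> dom S" if "t \<in> ?X" for t
      using v y bij_betw_apply[OF \<rho> that] by (cases "\<rho> t = 0") auto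
    then show "sat S A a y"
      unfolding sat_def using v \<rho>_root by (intro exI[of _ "v \<circ> \<rho>"]) (auto simp: atom_holds_ren)
  next
    assume "sat S A a y"
    then obtain v where v: "v a = y" "\<forall>t\<in>?X. v t \<in> dom S" "\<forall>at\<in>set A. atom_holds S v at"
      unfolding sat_def by auto
    have "atom_holds S (v \<circ> h \<circ> \<rho>) at" if "at \<in> set A" for at
    proof -
      have "atom_holds S (v \<circ> h \<circ> \<rho>) at = atom_holds S v at"
        using vars[OF that] h\<rho> by (intro atom_holds_cong) auto
      then show ?thesis using v(3) that by blast
    qed
    moreover have "v (h i) \<in> dom S" if "i < card ?X" for i
      using v(2) bij_betw_apply[OF h(1)] that by auto
    ultimately show "holds S ?Q y"
      unfolding holds_def using v h(2) pos by (intro exI[of _ "v \<circ> h"]) (auto simp: atom_holds_ren)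
  qed
  ultimately show ?thesis by (intro exI[of _ ?Q]) auto
qed

text \<open>The conjunction of queries with at most N variables each: the queries share the root 0,
  and the variable t > 0 of the i-th query becomes N * (i + 1) + t.\<close>

definition block_var :: "nat \<Rightarrow> nat \<Rightarrow> nat \<Rightarrow> nat" where
  "block_var N i t = (if t = 0 then 0 else N * Suc i + t)"

definition conj_atoms :: "nat \<Rightarrow> ('u,'b,'c) cq list \<Rightarrow> ('u,'b,'c) atom list" where
  "conj_atoms N Qs =
     concat (map (\<lambda>i. map (ren_atom (block_var N i)) (snd (Qs ! i))) [0..<length Qs])"

lemma set_conj_atoms:
  "at \<in> set (conj_atoms N Qs) \<longleftrightarrow>
     (\<exists>i<length Qs. \<exists>at0\<in>set (snd (Qs ! i)). at = ren_atom (block_var N i) at0)"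
  unfolding conj_atoms_def by auto

lemma block_var_div_mod:
  assumes "t < N"
  shows "t = 0 \<or> (block_var N i t div N = Suc i \<and> block_var N i t mod N = t)"
proof -
  have N: "N \<noteq> 0" using assms by auto
  have "(t + Suc i * N) div N = Suc i" "(t + Suc i * N) mod N = t"
    using div_mult_self1[OF N, of t "Suc i"] mod_mult_self1[of t "Suc i" N] assms by simp_all
  then show ?thesis unfolding block_var_def by (simp add: ac_simps)
qed

context
  fixes N :: nat and Qs :: "('u,'b,'c) cq list" and U :: "'u set" and B :: "'b set" and Cs :: "'c set"
  assumes scoped: "\<forall>Q\<in>set Qs. cq_over U B Cs Q \<and> fst Q < N"
begin

lemma conj_atoms_var_bound:
  "i < length Qs \<Longrightarrow> at0 \<in> set (snd (Qs ! i)) \<Longrightarrow> t \<in> atom_vars at0 \<Longrightarrow> t \<le> fst (Qs ! i) \<and> t < N"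
  using scoped nth_mem unfolding cq_over_def by fastforce

lemma atoms_over_conj_atoms: "atoms_over U B Cs (conj_atoms N Qs)"
proof -
  have "atom_over U B Cs at0" if "i < length Qs" "at0 \<in> set (snd (Qs ! i))" for i at0
    using scoped nth_mem[OF that(1)] that(2) unfolding cq_over_def by blast
  then show ?thesis unfolding atoms_over_def by (auto simp: set_conj_atoms atom_over_ren)
qed

lemma qvars_conj_atoms_cases:
  assumes "t \<in> qvars (conj_atoms N Qs) 0"
  obtains "t = 0" | i at0 t0 where "i < length Qs" "at0 \<in> set (snd (Qs ! i))"
    "t0 \<in> atom_vars at0" "t = block_var N i t0"
  using assms unfolding qvars_def by (force simp: conj_atoms_def atom_vars_ren)

lemma qvars_conj_atoms:
  assumes "1 \<le> N"
  shows "qvars (conj_atoms N Qs) 0 \<subseteq> {..<N * (length Qs + 1)}"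
proof
  fix t assume "t \<in> qvars (conj_atoms N Qs) 0"
  then show "t \<in> {..<N * (length Qs + 1)}"
  proof (cases rule: qvars_conj_atoms_cases)
    case 1 then show ?thesis using assms by auto
  next
    case (2 i at0 t0)
    then have "t < N * Suc i + N" using conj_atoms_var_bound unfolding block_var_def by auto
    also have "N * Suc i + N \<le> N * (length Qs + 1)"
      using mult_le_mono2[of "Suc (Suc i)" "length Qs + 1" N] \<open>i < length Qs\<close> by simp
    finally show ?thesis by simp
  qed
qed

lemma holds_of_sat_conj_atoms:
  assumes y: "y \<in> dom S" and "sat S (conj_atoms N Qs) 0 y"
  shows "\<forall>Q\<in>set Qs. holds S Q y"
proof -
  obtain \<nu> where \<nu>: "\<nu> 0 = y" "\<forall>t\<in>qvars (conj_atoms N Qs) 0. \<nu> t \<in> dom S"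
    "\<forall>at\<in>set (conj_atoms N Qs). atom_holds S \<nu> at"
    using assms(2) unfolding sat_def by auto
  show ?thesis
  proof
    fix Q assume "Q \<in> set Qs"
    then obtain i where i: "i < length Qs" "Q = Qs ! i" by (metis in_set_conv_nth)
    let ?W = "\<Union> (atom_vars ` set (snd Q))"
    define \<mu> where "\<mu> t = (if t \<in> ?W then \<nu> (block_var N i t) else y)" for t
    have mem: "ren_atom (block_var N i) at0 \<in> set (conj_atoms N Qs)" if "at0 \<in> set (snd Q)" for at0
      using i that unfolding set_conj_atoms by blast
    have "\<mu> t \<in> dom S" for t
      using mem \<nu>(2) y qvars_atom unfolding \<mu>_def by (fastforce simp: atom_vars_ren)
    moreover have "atom_holds S \<mu> at0" if "at0 \<in> set (snd Q)" for at0
    proof -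
      have "atom_holds S \<mu> at0 = atom_holds S (\<nu> \<circ> block_var N i) at0"
        using that by (intro atom_holds_cong) (auto simp: \<mu>_def)
      moreover have "atom_holds S \<nu> (ren_atom (block_var N i) at0)"
        using \<nu>(3) mem[OF that] by blast
      ultimately show ?thesis by (simp add: atom_holds_ren)
    qed
    moreover have "\<mu> 0 = y" using \<nu>(1) unfolding \<mu>_def block_var_def by auto
    ultimately show "holds S Q y" unfolding holds_def by blast
  qed
qed

lemma sat_conj_atoms_of_holds:
  assumes y: "y \<in> dom S" and all: "\<forall>Q\<in>set Qs. holds S Q y"
  shows "sat S (conj_atoms N Qs) 0 y"
proof -
  define V where "V i = (SOME v. v 0 = y \<and> (\<forall>j\<in>{1..fst (Qs ! i)}. v j \<in> dom S) \<and>
      (\<forall>at\<in>set (snd (Qs ! i)). atom_holds S v at))" for i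
  have V: "V i 0 = y \<and> (\<forall>j\<in>{1..fst (Qs ! i)}. V i j \<in> dom S) \<and>
      (\<forall>at\<in>set (snd (Qs ! i)). atom_holds S (V i) at)" if "i < length Qs" for i
  proof -
    have "holds S (Qs ! i) y" using all nth_mem[OF that] by blast
    then show ?thesis unfolding V_def holds_def by (rule someI_ex)
  qed
  define \<nu> where "\<nu> t = (if t = 0 then y
      else if t div N - 1 < length Qs then V (t div N - 1) (t mod N) else y)" for t
  have \<nu>_block: "\<nu> (block_var N i t) = V i t" if "i < length Qs" "t < N" for i t
    using block_var_div_mod[OF that(2), of i] V[OF that(1)]
    unfolding \<nu>_def by (auto simp: block_var_def that)
  have "\<nu> t \<in> dom S" if "t \<in> qvars (conj_atoms N Qs) 0" for t
    using that
  proof (cases rule: qvars_conj_atoms_cases)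
    case 1 then show ?thesis using y unfolding \<nu>_def by simp
  next
    case (2 i at0 t0)
    then show ?thesis using conj_atoms_var_bound[OF 2(1-3)] \<nu>_block V y
      by (cases "t0 = 0") auto
  qed
  moreover have "atom_holds S \<nu> at" if at: "at \<in> set (conj_atoms N Qs)" for at
  proof -
    obtain i at0 where i: "i < length Qs" "at0 \<in> set (snd (Qs ! i))"
      "at = ren_atom (block_var N i) at0"
      using at unfolding set_conj_atoms by blast
    have "atom_holds S (\<nu> \<circ> block_var N i) at0 = atom_holds S (V i) at0"
      using conj_atoms_var_bound[OF i(1,2)] \<nu>_block[OF i(1)] by (intro atom_holds_cong) auto
    then show ?thesis using V[OF i(1)] i by (simp add: atom_holds_ren)
  qed
  ultimately show ?thesis
    unfolding sat_def by (intro exI[of _ \<nu>]) (simp add: \<nu>_def)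
qed

lemma sat_conj_atoms_iff:
  assumes "y \<in> dom S"
  shows "sat S (conj_atoms N Qs) 0 y \<longleftrightarrow> (\<forall>Q\<in>set Qs. holds S Q y)"
  using holds_of_sat_conj_atoms[OF assms] sat_conj_atoms_of_holds[OF assms] by (rule iffI)

end

lemma holds_hom:
  assumes "holds A Q e" "e \<in> dom A" "\<forall>a\<in>set (snd Q). atom_vars a \<subseteq> {0..fst Q}"
    and dom: "\<And>x. x \<in> dom A \<Longrightarrow> h x \<in> dom A'"
    and urel: "\<And>u x. x \<in> dom A \<Longrightarrow> urel A u x \<Longrightarrow> urel A' u (h x)"
    and brel: "\<And>R x y. x \<in> dom A \<Longrightarrow> y \<in> dom A \<Longrightarrow> brel A R x y \<Longrightarrow> brel A' R (h x) (h y)"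
    and cval: "\<And>c. h (cval A c) = cval A' c"
  shows "holds A' Q (h e)"
proof -
  obtain v where v: "v 0 = e" "\<forall>i\<in>{1..fst Q}. v i \<in> dom A" "\<forall>a\<in>set (snd Q). atom_holds A v a"
    using assms(1) unfolding holds_def by auto
  have vdom: "v i \<in> dom A" if "i \<le> fst Q" for i
    using v assms(2) that by (cases "i = 0") auto
  have "atom_holds A' (h \<circ> v) a" if a: "a \<in> set (snd Q)" for a
  proof -
    have "\<forall>i\<in>atom_vars a. v i \<in> dom A" using assms(3) a vdom by fastforce
    then show ?thesis using v(3) a urel brel cval by (cases a) auto
  qed
  then show ?thesis unfolding holds_def using v dom by (intro exI[of _ "h \<circ> v"]) auto
qed

lemma holds_quot:
  assumes "holds Ab Q e" "e \<in> dom Ab" "\<forall>a\<in>set (snd Q). atom_vars a \<subseteq> {0..fst Q}"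
  shows "holds (quot U B Cs K n Ab) Q (qn U B Cs K n Ab e)"
proof (rule holds_hom[OF assms])
  have "x \<in> qn U B Cs K n Ab x" if "x \<in> dom Ab" for x using that unfolding qn_def by auto
  then show "\<And>x. x \<in> dom Ab \<Longrightarrow> qn U B Cs K n Ab x \<in> dom (quot U B Cs K n Ab)"
    and "\<And>u x. x \<in> dom Ab \<Longrightarrow> urel Ab u x \<Longrightarrow> urel (quot U B Cs K n Ab) u (qn U B Cs K n Ab x)"
    and "\<And>R x y. x \<in> dom Ab \<Longrightarrow> y \<in> dom Ab \<Longrightarrow> brel Ab R x y \<Longrightarrow>
           brel (quot U B Cs K n Ab) R (qn U B Cs K n Ab x) (qn U B Cs K n Ab y)"
    unfolding quot_def by auto
qed (simp add: quot_def)

lemma holds_lift_cq_iff: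
  assumes "coloring U B Cs A K Ab" "cq_over U B Cs Q"
  shows "holds Ab (lift_cq Q) e \<longleftrightarrow> holds A Q e"
proof -
  have "atom_holds Ab v (map_atom Inl id id a) \<longleftrightarrow> atom_holds A v a" if "a \<in> set (snd Q)" for v a
    using assms that unfolding coloring_def cq_over_def by (cases a) auto
  moreover have "dom Ab = dom A" using assms(1) unfolding coloring_def by auto
  ultimately show ?thesis unfolding holds_def lift_cq_def by auto
qed

section \<open>Positive types in a natural coloring of a VTDAG\<close>

locale colored_vtdag =
  fixes U :: "'u set" and B :: "'b set" and Cs :: "'c set"
    and C :: "('e,'u,'b,'c) struc"
    and K :: "(nat \<times> nat) set" and Cb :: "('e,'u + nat \<times> nat,'b,'c) struc"
    and m :: nat
  assumes vt: "vtdag U B Cs C"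
    and ncol: "natural_coloring U B Cs C K Cb m"
begin

definition UBar :: "('u + nat \<times> nat) set" where "UBar = Inl ` U \<union> Inr ` K"
abbreviation Con where "Con \<equiv> Ccon Cs C"
abbreviation Non where "Non \<equiv> Cnon Cs C"
abbreviation tp where "tp J x \<equiv> ptp U B Cs K J Cb x"
definition tp_eq :: "nat \<Rightarrow> 'e \<Rightarrow> 'e \<Rightarrow> bool" where
  "tp_eq J x y \<longleftrightarrow> x \<in> dom C \<and> y \<in> dom C \<and> tp J x = tp J y"
definition tp_le :: "nat \<Rightarrow> 'e \<Rightarrow> 'e \<Rightarrow> bool" where
  "tp_le J x y \<longleftrightarrow> x \<in> dom C \<and> y \<in> dom C \<and> tp J x \<subseteq> tp J y"
definition color :: "'e \<Rightarrow> nat \<times> nat" where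
  "color x = (THE k. k \<in> K \<and> urel Cb (Inr k) x)"

lemma is_coloring: "coloring U B Cs C K Cb" using ncol unfolding natural_coloring_def by blast
lemma finU: "finite U" and finB: "finite B" and finCs: "finite Cs" and finK: "finite K"
  using is_coloring unfolding coloring_def by auto
lemma dom_Cb[simp]: "dom Cb = dom C" using is_coloring unfolding coloring_def by auto
lemma brel_Cb: "R \<in> B \<Longrightarrow> brel Cb R x y = brel C R x y"
  using is_coloring unfolding coloring_def by auto
lemma cval_Cb: "c \<in> Cs \<Longrightarrow> cval Cb c = cval C c"
  using is_coloring unfolding coloring_def by auto
lemma color_ex1: "x \<in> dom C \<Longrightarrow> \<exists>!hl. hl \<in> K \<and> urel Cb (Inr hl) x"
  using is_coloring unfolding coloring_def by auto
lemma color_spec: "x \<in> dom C \<Longrightarrow> color x \<in> K \<and> urel Cb (Inr (color x)) x"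
  unfolding color_def by (rule theI') (rule color_ex1)
lemma color_unique: "x \<in> dom C \<Longrightarrow> k \<in> K \<Longrightarrow> urel Cb (Inr k) x \<Longrightarrow> k = color x"
  using color_spec color_ex1 by blast
lemma struc_wf: "struc_wf U B Cs C" using vt unfolding vtdag_def by blast
lemma cval_dom: "c \<in> Cs \<Longrightarrow> cval C c \<in> dom C"
  using struc_wf unfolding struc_wf_def by blast
lemma Con_dom: "Con \<subseteq> dom C" using cval_dom unfolding Ccon_def by auto
lemma Non_dom: "Non \<subseteq> dom C" unfolding Cnon_def by auto
lemma finite_Con: "finite Con" using finCs unfolding Ccon_def by auto
lemma finite_UBar: "finite UBar" unfolding UBar_def using finU finK by auto

lemma tp_restrict: "J' \<le> J \<Longrightarrow> tp J' x = tp J x \<inter> {Q. fst Q < J'}"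
  unfolding ptp_def by auto

lemma tp_eq_mono: "tp_eq J x y \<Longrightarrow> J' \<le> J \<Longrightarrow> tp_eq J' x y"
  unfolding tp_eq_def using tp_restrict by metis
lemma tp_le_mono: "tp_le J x y \<Longrightarrow> J' \<le> J \<Longrightarrow> tp_le J' x y"
  unfolding tp_le_def using tp_restrict by (metis Int_mono order_refl)
lemma tp_eq_sym: "tp_eq J x y \<Longrightarrow> tp_eq J y x" unfolding tp_eq_def by auto
lemma tp_eq_trans: "tp_eq J x y \<Longrightarrow> tp_eq J y z \<Longrightarrow> tp_eq J x z"
  unfolding tp_eq_def by auto
lemma tp_eq_refl: "x \<in> dom C \<Longrightarrow> tp_eq J x x" unfolding tp_eq_def by auto
lemma tp_le_refl: "x \<in> dom C \<Longrightarrow> tp_le J x x" unfolding tp_le_def by auto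
lemma tp_le_trans: "tp_le J x y \<Longrightarrow> tp_le J y z \<Longrightarrow> tp_le J x z"
  unfolding tp_le_def by auto
lemma tp_eq_imp_le: "tp_eq J x y \<Longrightarrow> tp_le J x y"
  unfolding tp_eq_def tp_le_def by auto
lemma tp_eq_dom: "tp_eq J x y \<Longrightarrow> x \<in> dom C \<and> y \<in> dom C"
  unfolding tp_eq_def by auto
lemma tp_le_dom: "tp_le J x y \<Longrightarrow> x \<in> dom C \<and> y \<in> dom C"
  unfolding tp_le_def by auto

lemma tp_le_holds: "tp_le J x y \<Longrightarrow> cq_over UBar B Cs Q \<Longrightarrow> fst Q < J \<Longrightarrow> holds Cb Q x \<Longrightarrow> holds Cb Q y"
  unfolding tp_le_def ptp_def UBar_def by auto

lemma tp_le_urel: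
  assumes "tp_le J x y" "1 \<le> J" "u \<in> UBar" "urel Cb u x"
  shows "urel Cb u y"
proof -
  have "holds Cb (0, [UAt u 0]) x" using assms tp_le_dom unfolding holds_def by auto
  then have "holds Cb (0, [UAt u 0]) y" using tp_le_holds[OF assms(1), of "(0, [UAt u 0])"] assms
    unfolding cq_over_def by auto
  then show ?thesis unfolding holds_def by auto
qed

lemma tp_eq_color:
  assumes "tp_eq J x y" "1 \<le> J"
  shows "color x = color y"
proof -
  have x: "x \<in> dom C" and y: "y \<in> dom C" using assms tp_eq_dom by auto
  have "urel Cb (Inr (color x)) y"
    using tp_le_urel[OF tp_eq_imp_le[OF assms(1)] assms(2), of "Inr (color x)"] color_spec[OF x]
    unfolding UBar_def by auto
  then show ?thesis using color_unique[OF y] color_spec[OF x] by auto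
qed

lemma tp_le_const:
  assumes "tp_le J x y" "1 \<le> J" "c \<in> Cs" "x = cval C c"
  shows "y = x"
proof -
  have "holds Cb (0, [EqC 0 c]) x" using assms tp_le_dom cval_Cb unfolding holds_def by auto
  then have "holds Cb (0, [EqC 0 c]) y" using tp_le_holds[OF assms(1), of "(0, [EqC 0 c])"] assms
    unfolding cq_over_def by auto
  then show ?thesis unfolding holds_def using assms cval_Cb by auto
qed

lemma tp_eq_Con:
  assumes "tp_eq J b x" "1 \<le> J" "x \<in> Con"
  shows "b = x"
proof -
  obtain c where "c \<in> Cs" "x = cval C c" using assms(3) unfolding Ccon_def by auto
  then show ?thesis using tp_le_const[OF tp_eq_imp_le[OF tp_eq_sym[OF assms(1)]] assms(2)] by auto
qed

lemma tp_eq_Non: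
  assumes "tp_eq J b x" "1 \<le> J" "x \<in> Non"
  shows "b \<in> Non"
proof -
  have "b \<in> dom C" using assms tp_eq_dom by auto
  moreover have "b \<notin> Con"
    using tp_eq_Con[OF tp_eq_sym[OF assms(1)] assms(2)] assms(3) unfolding Cnon_def by auto
  ultimately show ?thesis unfolding Cnon_def by auto
qed

lemma tp_le_brel_to_const:
  assumes "tp_le J x y" "2 \<le> J" "R \<in> B" "c \<in> Cs" "brel C R x (cval C c)"
  shows "brel C R y (cval C c)"
proof -
  let ?Q = "(1::nat, [BAt R 0 1, EqC 1 c])"
  have "holds Cb ?Q x" unfolding holds_def
    using assms tp_le_dom cval_Cb brel_Cb cval_dom
    by (intro exI[of _ "\<lambda>i. if i = 0 then x else cval C c"]) auto
  then have "holds Cb ?Q y" using tp_le_holds[OF assms(1), of ?Q] assms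
    unfolding cq_over_def by auto
  then show ?thesis unfolding holds_def using assms cval_Cb brel_Cb by auto
qed

lemma tp_le_brel_from_const:
  assumes "tp_le J x y" "2 \<le> J" "R \<in> B" "c \<in> Cs" "brel C R (cval C c) x"
  shows "brel C R (cval C c) y"
proof -
  let ?Q = "(1::nat, [BAt R 1 0, EqC 1 c])"
  have "holds Cb ?Q x" unfolding holds_def
    using assms tp_le_dom cval_Cb brel_Cb cval_dom
    by (intro exI[of _ "\<lambda>i. if i = 0 then x else cval C c"]) auto
  then have "holds Cb ?Q y" using tp_le_holds[OF assms(1), of ?Q] assms
    unfolding cq_over_def by auto
  then show ?thesis unfolding holds_def using assms cval_Cb brel_Cb by auto
qed

text \<open>Equal colors would make P(x) \<union> Con isomorphic to Con, too small to contain x.\<close>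

lemma color_Non_Con:
  assumes "x \<in> Non" "y \<in> Con"
  shows "color x \<noteq> color y"
proof
  assume eq: "color x = color y"
  have x: "x \<in> dom C" and y: "y \<in> dom C" using assms Non_dom Con_dom by auto
  obtain h l where hl: "color x = (h, l)" by fastforce
  have "iso_substr U B Cs C (Pset B Cs C x \<union> Con) (Pset B Cs C y \<union> Con)"
    using ncol color_spec[OF x] color_spec[OF y] eq x y hl unfolding natural_coloring_def by metis
  moreover have "Pset B Cs C y \<union> Con = Con" using assms(2) unfolding Pset_def by auto
  ultimately obtain f where f: "bij_betw f (Pset B Cs C x \<union> Con) Con"
    unfolding iso_substr_def by auto
  have fin: "finite (Pset B Cs C x \<union> Con)" using bij_betw_finite[OF f] finite_Con by auto
  have "x \<in> Pset B Cs C x" unfolding Pset_def by auto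
  moreover have "x \<notin> Con" using assms(1) unfolding Cnon_def by auto
  ultimately have "Con \<subset> Pset B Cs C x \<union> Con" by auto
  then have "card Con < card (Pset B Cs C x \<union> Con)" using fin by (metis psubset_card_mono)
  then show False using bij_betw_same_card[OF f] by auto
qed

lemma Pset_self: "e \<in> Pset B Cs C e" unfolding Pset_def by auto
lemma Pset_Non: "e \<in> Non \<Longrightarrow> Pset B Cs C e = {e} \<union> {x \<in> Non. \<exists>R\<in>B. brel C R x e}"
  unfolding Pset_def Cnon_def by auto
lemma Pset_dom: "e \<in> dom C \<Longrightarrow> Pset B Cs C e \<subseteq> dom C"
  unfolding Pset_def Cnon_def by auto
lemma Pk_dom: "e \<in> dom C \<Longrightarrow> Pk B Cs C k e \<subseteq> dom C"
  by (induction k) (auto dest: Pset_dom)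
lemma Pk_Suc: "Pk B Cs C k e \<subseteq> Pk B Cs C (Suc k) e"
  using Pset_self by auto
lemma Pk_mono: "k \<le> k' \<Longrightarrow> Pk B Cs C k e \<subseteq> Pk B Cs C k' e"
proof (induction k' )
  case 0 then show ?case by auto
next
  case (Suc k') then show ?case using Pk_Suc[of k' e] by (cases "k = Suc k'") auto
qed

lemma same_color_notin_Pk:
  assumes "x \<in> dom C" "y \<in> Pk B Cs C k x" "k \<le> m" "y \<noteq> x" "color y = color x"
  shows False
proof -
  have x: "x \<in> dom C" using assms(1) .
  have y: "y \<in> dom C" using Pk_dom assms by auto
  have ym: "y \<in> Pk B Cs C m x" using Pk_mono assms by auto
  obtain h l where hl: "color x = (h,l)" by fastforce
  show False
    using ncol color_spec[OF x] color_spec[OF y] hl ym assms(4,5) x y unfolding natural_coloring_def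
    by (metis assms(1))
qed

definition edge where "edge = {(d, e). d \<in> Non \<and> e \<in> Non \<and> (\<exists>R\<in>B. brel C R d e)}"
lemma acyclic_edge: "acyclic edge" using vt unfolding vtdag_def edge_def by blast
lemma parent_unique: "R \<in> B \<Longrightarrow> e \<in> Non \<Longrightarrow> d \<in> Non \<Longrightarrow> d' \<in> Non \<Longrightarrow> brel C R d e \<Longrightarrow> brel C R d' e \<Longrightarrow> d = d'"
  using vt unfolding vtdag_def by blast
lemma Pset_comparable: "e \<in> Non \<Longrightarrow> d \<in> Pset B Cs C e \<Longrightarrow> d' \<in> Pset B Cs C e \<Longrightarrow>
   d \<in> Pset B Cs C d' \<or> d' \<in> Pset B Cs C d"
  using vt unfolding vtdag_def by blast

lemma Pset_color_inj:
  assumes "z \<in> Non" "p \<in> Pset B Cs C z" "p' \<in> Pset B Cs C z" "color p = color p'"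
  shows "p = p'"
proof (rule ccontr)
  assume ne: "p \<noteq> p'"
  have z: "z \<in> dom C" using assms Non_dom by auto
  have p: "p \<in> dom C" "p' \<in> dom C" using Pset_dom[OF z] assms by auto
  from Pset_comparable[OF assms(1-3)] show False
  proof
    assume "p \<in> Pset B Cs C p'"
    then show False using same_color_notin_Pk[OF p(2), of p 0] ne assms(4) by auto
  next
    assume "p' \<in> Pset B Cs C p"
    then show False using same_color_notin_Pk[OF p(1), of p' 0] ne assms(4) by auto
  qed
qed

lemma Pset_edge: "e \<in> Non \<Longrightarrow> d \<in> Pset B Cs C e \<Longrightarrow> d \<noteq> e \<Longrightarrow> (d, e) \<in> edge"
  unfolding Pset_def edge_def Cnon_def by auto

text \<open>Distinct parents of an element have distinct colors, so the type of an element determines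
  the types of its parents one level lower.\<close>

definition parent_cq ::
    "('u + nat \<times> nat, 'b, 'c) cq \<Rightarrow> nat \<times> nat \<Rightarrow> 'b \<Rightarrow> ('u + nat \<times> nat, 'b, 'c) cq" where
  "parent_cq Q k R = (Suc (fst Q), BAt R 1 0 # UAt (Inr k) 1 # map (ren_atom Suc) (snd Q))"

lemma parent_cq_over: "cq_over UBar B Cs Q \<Longrightarrow> k \<in> K \<Longrightarrow> R \<in> B \<Longrightarrow> cq_over UBar B Cs (parent_cq Q k R)"
  unfolding cq_over_def parent_cq_def UBar_def by (auto simp: atom_over_ren atom_vars_ren subset_iff)

lemma holds_parent_cq:
  assumes "y \<in> dom C"
  shows "holds Cb (parent_cq Q k R) y \<longleftrightarrow>
    (\<exists>p. p \<in> dom C \<and> brel Cb R p y \<and> urel Cb (Inr k) p \<and> holds Cb Q p)"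
proof
  assume "holds Cb (parent_cq Q k R) y"
  then obtain v where v: "v 0 = y" "\<forall>i\<in>{1..Suc (fst Q)}. v i \<in> dom C"
    "\<forall>a\<in>set (snd (parent_cq Q k R)). atom_holds Cb v a" unfolding holds_def parent_cq_def by auto
  have "holds Cb Q (v 1)" unfolding holds_def
    using v by (intro exI[of _ "v \<circ> Suc"]) (auto simp: parent_cq_def atom_holds_ren)
  then show "\<exists>p. p \<in> dom C \<and> brel Cb R p y \<and> urel Cb (Inr k) p \<and> holds Cb Q p"
    using v by (intro exI[of _ "v 1"]) (auto simp: parent_cq_def)
next
  assume "\<exists>p. p \<in> dom C \<and> brel Cb R p y \<and> urel Cb (Inr k) p \<and> holds Cb Q p"
  then obtain p v where p: "p \<in> dom C" "brel Cb R p y" "urel Cb (Inr k) p" and v: "v 0 = p"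
    "\<forall>i\<in>{1..fst Q}. v i \<in> dom C" "\<forall>a\<in>set (snd Q). atom_holds Cb v a" unfolding holds_def by auto
  let ?v = "\<lambda>t. if t = 0 then y else v (t - 1)"
  have "?v \<circ> Suc = v" by auto
  moreover have "v t \<in> dom C" if "t \<le> fst Q" for t
    using v p that by (cases "t = 0") auto
  ultimately show "holds Cb (parent_cq Q k R) y" unfolding holds_def parent_cq_def
    using p v assms by (intro exI[of _ ?v]) (auto simp: atom_holds_ren)
qed

lemma holds_parent_cq_iff:
  assumes "y \<in> Non" "d \<in> Non" "R \<in> B" "brel C R d y"
  shows "holds Cb (parent_cq Q (color d) R) y \<longleftrightarrow> holds Cb Q d"
proof -
  have y: "y \<in> dom C" and d: "d \<in> dom C" using assms Non_dom by auto
  show ?thesis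
  proof
    assume "holds Cb (parent_cq Q (color d) R) y"
    then obtain p where p: "p \<in> dom C" "brel Cb R p y" "urel Cb (Inr (color d)) p" "holds Cb Q p"
      using holds_parent_cq[OF y] by auto
    have "color p = color d" using color_unique[OF p(1) _ p(3)] color_spec[OF d] by auto
    then have "p \<notin> Con" using color_Non_Con[OF assms(2)] by metis
    then have "p \<in> Non" using p unfolding Cnon_def by auto
    then have "p = d"
      using parent_unique[OF assms(3,1) _ assms(2)] p(2) assms(4) brel_Cb[OF assms(3)] by auto
    then show "holds Cb Q d" using p by auto
  next
    assume "holds Cb Q d"
    then show "holds Cb (parent_cq Q (color d) R) y"
      using holds_parent_cq[OF y] d color_spec[OF d] assms brel_Cb by auto
  qed
qed

lemma tp_eq_parent:
  assumes "tp_eq J b c" "Suc i \<le> J" "1 \<le> i" "R \<in> B" "brel C R a b" "a \<in> Non" "b \<in> Non"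
  shows "\<exists>p\<in>Non. brel C R p c \<and> tp_eq i p a"
proof -
  have c: "c \<in> Non" using tp_eq_Non[OF tp_eq_sym[OF assms(1)] _ assms(7)] assms by auto
  have a: "a \<in> dom C" using assms Non_dom by auto
  have k: "color a \<in> K" using color_spec[OF a] by auto
  let ?Q0 = "(0::nat, [] :: ('u + nat \<times> nat, 'b, 'c) atom list)"
  have q0o: "cq_over UBar B Cs ?Q0" unfolding cq_over_def by auto
  have "holds Cb ?Q0 a" unfolding holds_def by auto
  then have "holds Cb (parent_cq ?Q0 (color a) R) b"
    using holds_parent_cq_iff[OF assms(7,6,4,5)] by auto
  then have "parent_cq ?Q0 (color a) R \<in> tp J b"
    unfolding ptp_def using parent_cq_over[OF q0o k assms(4)] assms(2,3)
    by (auto simp: parent_cq_def UBar_def)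
  then have "holds Cb (parent_cq ?Q0 (color a) R) c"
    using assms(1) unfolding tp_eq_def ptp_def by auto
  then obtain p where p: "p \<in> dom C" "brel Cb R p c" "urel Cb (Inr (color a)) p"
    using holds_parent_cq c Non_dom by blast
  have cp: "color p = color a" using color_unique[OF p(1) k p(3)] by auto
  then have "p \<notin> Con" using color_Non_Con[OF assms(6)] by metis
  then have pCN: "p \<in> Non" using p unfolding Cnon_def by auto
  have br: "brel C R p c" using p brel_Cb assms by auto
  have "tp i p = tp i a"
  proof (rule set_eqI)
    fix Q
    show "Q \<in> tp i p \<longleftrightarrow> Q \<in> tp i a"
    proof (cases "cq_over UBar B Cs Q \<and> fst Q < i")
      case True
      then have o: "cq_over UBar B Cs (parent_cq Q (color a) R)" "fst (parent_cq Q (color a) R) < J"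
        using parent_cq_over k assms by (auto simp: parent_cq_def)
      have "holds Cb Q p \<longleftrightarrow> holds Cb (parent_cq Q (color a) R) c"
        using holds_parent_cq_iff[OF c pCN assms(4) br] cp by auto
      also have "\<dots> \<longleftrightarrow> holds Cb (parent_cq Q (color a) R) b"
        using assms(1) o unfolding tp_eq_def ptp_def UBar_def by blast
      also have "\<dots> \<longleftrightarrow> holds Cb Q a"
        using holds_parent_cq_iff[OF assms(7,6,4,5)] by auto
      finally show ?thesis using True unfolding ptp_def UBar_def by auto
    next
      case False then show ?thesis unfolding ptp_def UBar_def by auto
    qed
  qed
  then have "tp_eq i p a" unfolding tp_eq_def using p a by auto
  then show ?thesis using pCN br by auto
qed

lemma tp_le_sat:
  assumes "tp_le J x y" "atoms_over UBar B Cs A" "card (qvars A a) \<le> J" "sat Cb A a x"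
  shows "sat Cb A a y"
proof -
  obtain Q where Q: "cq_over UBar B Cs Q" "fst Q = card (qvars A a) - 1"
      "\<forall>y\<in>dom Cb. holds Cb Q y \<longleftrightarrow> sat Cb A a y"
    using sat_as_cq[OF assms(2), where S = Cb and a = a] by blast
  have "0 < card (qvars A a)" using finite_qvars root_in_qvars[of a A] by (auto simp: card_gt_0_iff)
  then have "fst Q < J" using Q(2) assms(3) by auto
  moreover have "x \<in> dom Cb" "y \<in> dom Cb" using tp_le_dom[OF assms(1)] by auto
  ultimately show ?thesis using tp_le_holds[OF assms(1) Q(1)] Q(3) assms(4) by blast
qed

definition atoms_below :: "nat \<Rightarrow> ('u + nat \<times> nat, 'b, 'c) atom set" where
  "atoms_below N = {at. atom_over UBar B Cs at \<and> atom_vars at \<subseteq> {..<N}}"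

lemma finite_atoms_below: "finite (atoms_below N)"
proof -
  have "atoms_below N \<subseteq> (\<lambda>(u, x). UAt u x) ` (UBar \<times> {..<N}) \<union>
      (\<lambda>(R, x, y). BAt R x y) ` (B \<times> {..<N} \<times> {..<N}) \<union> (\<lambda>(x, c). EqC x c) ` ({..<N} \<times> Cs)"
  proof
    fix at assume "at \<in> atoms_below N"
    then show "at \<in> (\<lambda>(u, x). UAt u x) ` (UBar \<times> {..<N}) \<union>
        (\<lambda>(R, x, y). BAt R x y) ` (B \<times> {..<N} \<times> {..<N}) \<union> (\<lambda>(x, c). EqC x c) ` ({..<N} \<times> Cs)"
      unfolding atoms_below_def by (cases at) (auto simp: image_iff)
  qed
  moreover have "finite ((\<lambda>(u, x). UAt u x) ` (UBar \<times> {..<N}) \<union>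
      (\<lambda>(R, x, y). BAt R x y) ` (B \<times> {..<N} \<times> {..<N}) \<union> (\<lambda>(x, c). EqC x c) ` ({..<N} \<times> Cs))"
    using finite_UBar finB finCs by auto
  ultimately show ?thesis by (rule finite_subset)
qed

definition type_size :: "nat \<Rightarrow> nat" where
  "type_size N = N * (card ({..<N} \<times> Pow (atoms_below N)) + 1)"

text \<open>Up to the order and repetition of atoms there are finitely many queries with fewer than
  N variables, so the conjunction of one representative of each query in the N-type of x is
  a single query; it pins down that type from below.\<close>

lemma tp_representatives:
  obtains Qs where "set Qs \<subseteq> tp N x" "length Qs \<le> card ({..<N} \<times> Pow (atoms_below N))"
    "\<And>Q. Q \<in> tp N x \<Longrightarrow> \<exists>Q'\<in>set Qs. fst Q' = fst Q \<and> set (snd Q') = set (snd Q)"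
proof -
  define key where "key Q = (fst Q, set (snd Q))" for Q :: "('u + nat \<times> nat, 'b, 'c) cq"
  have keys: "key ` tp N x \<subseteq> {..<N} \<times> Pow (atoms_below N)"
  proof
    fix k assume "k \<in> key ` tp N x"
    then obtain Q where Q: "Q \<in> tp N x" "k = key Q" by blast
    then have "fst Q < N" "\<forall>a\<in>set (snd Q). atom_over UBar B Cs a \<and> atom_vars a \<subseteq> {0..fst Q}"
      unfolding ptp_def cq_over_def UBar_def by auto
    then show "k \<in> {..<N} \<times> Pow (atoms_below N)"
      using Q(2) unfolding key_def atoms_below_def by fastforce
  qed
  have fin: "finite ({..<N} \<times> Pow (atoms_below N))" using finite_atoms_below by simp
  obtain ks where ks: "set ks = key ` tp N x" "distinct ks"
    using finite_distinct_list[OF finite_subset[OF keys fin]] by blast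
  define rep where "rep k = (SOME Q. Q \<in> tp N x \<and> key Q = k)" for k
  have rep: "rep k \<in> tp N x \<and> key (rep k) = k" if "k \<in> key ` tp N x" for k
    unfolding rep_def by (rule someI_ex) (use that in blast)
  define Qs where "Qs = map rep ks"
  show thesis
  proof (rule that)
    show "set Qs \<subseteq> tp N x" unfolding Qs_def set_map using rep ks(1) by blast
    have "length Qs = card (key ` tp N x)"
      unfolding Qs_def using distinct_card[OF ks(2)] ks(1) by simp
    then show "length Qs \<le> card ({..<N} \<times> Pow (atoms_below N))"
      using card_mono[OF fin keys] by simp
    show "\<exists>Q'\<in>set Qs. fst Q' = fst Q \<and> set (snd Q') = set (snd Q)" if "Q \<in> tp N x" for Q
    proof -
      have k: "key Q \<in> key ` tp N x" using that by blast
      then have "key (rep (key Q)) = key Q" using rep by blast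
      moreover have "rep (key Q) \<in> set Qs" unfolding Qs_def using ks(1) k by simp
      ultimately show ?thesis unfolding key_def by auto
    qed
  qed
qed

lemma type_query:
  assumes x: "x \<in> dom C" and N: "1 \<le> N"
  obtains A where "atoms_over UBar B Cs A" "card (qvars A 0) \<le> type_size N" "sat Cb A 0 x"
    "\<And>y. y \<in> dom C \<Longrightarrow> sat Cb A 0 y \<Longrightarrow> tp_le N x y"
proof -
  obtain Qs where Qs: "set Qs \<subseteq> tp N x" "length Qs \<le> card ({..<N} \<times> Pow (atoms_below N))"
    "\<And>Q. Q \<in> tp N x \<Longrightarrow> \<exists>Q'\<in>set Qs. fst Q' = fst Q \<and> set (snd Q') = set (snd Q)"
    using tp_representatives[of N x] by blast
  have scoped: "\<forall>Q\<in>set Qs. cq_over UBar B Cs Q \<and> fst Q < N"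
    using Qs(1) unfolding ptp_def UBar_def by auto
  show thesis
  proof
    show "atoms_over UBar B Cs (conj_atoms N Qs)" by (rule atoms_over_conj_atoms[OF scoped])
    have "card (qvars (conj_atoms N Qs) 0) \<le> N * (length Qs + 1)"
      using card_mono[OF _ qvars_conj_atoms[OF scoped N]] by simp
    also have "\<dots> \<le> type_size N" unfolding type_size_def using Qs(2) by simp
    finally show "card (qvars (conj_atoms N Qs) 0) \<le> type_size N" .
    have "\<forall>Q\<in>set Qs. holds Cb Q x" using Qs(1) unfolding ptp_def by auto
    then show "sat Cb (conj_atoms N Qs) 0 x"
      using sat_conj_atoms_iff[OF scoped, where S = Cb] x by simp
  next
    fix y assume y: "y \<in> dom C" "sat Cb (conj_atoms N Qs) 0 y"
    have holds_y: "\<forall>Q\<in>set Qs. holds Cb Q y"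
      using y sat_conj_atoms_iff[OF scoped, where S = Cb and y = y] by simp
    have "Q \<in> tp N y" if Q: "Q \<in> tp N x" for Q
    proof -
      obtain Q' where Q': "Q' \<in> set Qs" "fst Q' = fst Q" "set (snd Q') = set (snd Q)"
        using Qs(3)[OF Q] by blast
      then have "holds Cb Q y" using holds_y holds_set_cong[of Q' Q Cb y] by simp
      then show ?thesis using Q by (simp add: ptp_def)
    qed
    then have "tp N x \<subseteq> tp N y" by blast
    then show "tp_le N x y" unfolding tp_le_def using x y(1) by simp
  qed
qed

section \<open>Loose assignments\<close>

text \<open>A loose assignment satisfies the unary and constant atoms and satisfies the binary atoms up
  to j-equivalence of both ends; this is what an assignment into the quotient M_j provides.\<close>

definition loose :: "nat \<Rightarrow> ('u + nat \<times> nat, 'b, 'c) atom list \<Rightarrow> (nat \<Rightarrow> 'e) \<Rightarrow> bool" where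
  "loose j A w \<longleftrightarrow> (\<forall>at\<in>set A. case at of
      UAt u x \<Rightarrow> urel Cb u (w x)
    | EqC x c \<Rightarrow> w x = cval Cb c
    | BAt R x y \<Rightarrow> (\<exists>a b. tp_eq j a (w x) \<and> tp_eq j b (w y) \<and> brel Cb R a b))"

definition ncvars :: "('u + nat \<times> nat, 'b, 'c) atom list \<Rightarrow> nat \<Rightarrow> (nat \<Rightarrow> 'e) \<Rightarrow> nat set" where
  "ncvars A v0 w = {t \<in> qvars A v0. w t \<notin> Con}"

definition ncedge ::
    "('u + nat \<times> nat, 'b, 'c) atom list \<Rightarrow> nat \<Rightarrow> (nat \<Rightarrow> 'e) \<Rightarrow> nat \<Rightarrow> nat \<Rightarrow> bool" where
  "ncedge A v0 w x y \<longleftrightarrow> (\<exists>R. BAt R x y \<in> set A) \<and> x \<in> ncvars A v0 w \<and> y \<in> ncvars A v0 w"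

definition sink where
  "sink A v0 w s \<longleftrightarrow> s \<in> ncvars A v0 w \<and> \<not> (\<exists>y. ncedge A v0 w s y)"

definition loose_instance where
  "loose_instance A v0 w j \<longleftrightarrow>
     card (qvars A v0) \<le> m \<and> atoms_over UBar B Cs A \<and> (\<forall>t\<in>qvars A v0. w t \<in> dom C) \<and> loose j A w"

definition solution where
  "solution Ob A v0 w g \<longleftrightarrow>
     (\<forall>t\<in>qvars A v0. g t \<in> dom C) \<and> (\<forall>at\<in>set A. atom_holds Cb g at) \<and>
     g v0 = w v0 \<and> (\<forall>t\<in>qvars A v0. tp_le Ob (w t) (g t))"

lemma loose_B:
  "loose j A w \<Longrightarrow> BAt R x y \<in> set A \<Longrightarrow> \<exists>a b. tp_eq j a (w x) \<and> tp_eq j b (w y) \<and> brel Cb R a b"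
  unfolding loose_def by fastforce
lemma loose_U: "loose j A w \<Longrightarrow> UAt u x \<in> set A \<Longrightarrow> urel Cb u (w x)"
  unfolding loose_def by fastforce
lemma loose_E: "loose j A w \<Longrightarrow> EqC x c \<in> set A \<Longrightarrow> w x = cval Cb c"
  unfolding loose_def by fastforce
lemma atoms_over_B: "atoms_over UBar B Cs A \<Longrightarrow> BAt R x y \<in> set A \<Longrightarrow> R \<in> B"
  unfolding atoms_over_def by fastforce
lemma atoms_over_E: "atoms_over UBar B Cs A \<Longrightarrow> EqC x c \<in> set A \<Longrightarrow> c \<in> Cs"
  unfolding atoms_over_def by fastforce
lemma atoms_over_U: "atoms_over UBar B Cs A \<Longrightarrow> UAt u x \<in> set A \<Longrightarrow> u \<in> UBar"
  unfolding atoms_over_def by fastforce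

lemma Non_if_notin_Con: "x \<in> dom C \<Longrightarrow> x \<notin> Con \<Longrightarrow> x \<in> Non"
  unfolding Cnon_def by auto

lemma loose_brel_Con:
  assumes "loose j A w" "2 \<le> j" "BAt R x y \<in> set A" "R \<in> B" "w x \<in> Con \<or> w y \<in> Con"
    "w x \<in> dom C" "w y \<in> dom C"
  shows "brel Cb R (w x) (w y)"
proof -
  obtain a b where ab: "tp_eq j a (w x)" "tp_eq j b (w y)" "brel Cb R a b"
    using loose_B[OF assms(1,3)] by auto
  have br: "brel C R a b" using ab brel_Cb assms by auto
  from assms(5) show ?thesis
  proof
    assume "w y \<in> Con"
    then have "b = w y" using tp_eq_Con ab assms by auto
    moreover obtain c where c: "c \<in> Cs" "w y = cval C c"
      using \<open>w y \<in> Con\<close> unfolding Ccon_def by auto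
    ultimately have "brel C R (w x) (cval C c)"
      using tp_le_brel_to_const[OF tp_eq_imp_le[OF ab(1)] assms(2,4) c(1)] br by auto
    then show ?thesis using c brel_Cb assms by auto
  next
    assume "w x \<in> Con"
    then have "a = w x" using tp_eq_Con ab assms by auto
    moreover obtain c where c: "c \<in> Cs" "w x = cval C c"
      using \<open>w x \<in> Con\<close> unfolding Ccon_def by auto
    ultimately have "brel C R (cval C c) (w y)"
      using tp_le_brel_from_const[OF tp_eq_imp_le[OF ab(2)] assms(2,4) c(1)] br by auto
    then show ?thesis using c brel_Cb assms by auto
  qed
qed

lemma ncedge_lift_parent:
  assumes lo: "loose j A w" and ov: "atoms_over UBar B Cs A" and dm: "\<forall>t\<in>qvars A v0. w t \<in> dom C"
    and e: "ncedge A v0 w y z" and c: "tp_eq J c (w z)" and J: "2 \<le> J" "J \<le> j"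
  shows "\<exists>p. tp_eq (J - 1) p (w y) \<and> p \<in> Pset B Cs C c \<and> (p, c) \<in> edge"
proof -
  obtain R where R: "BAt R y z \<in> set A" "y \<in> ncvars A v0 w" "z \<in> ncvars A v0 w"
    using e unfolding ncedge_def by auto
  have RB: "R \<in> B" using atoms_over_B[OF ov R(1)] .
  obtain a b where ab: "tp_eq j a (w y)" "tp_eq j b (w z)" "brel Cb R a b"
    using loose_B[OF lo R(1)] by auto
  have w: "w y \<in> Non" "w z \<in> Non" using R dm Non_if_notin_Con unfolding ncvars_def by auto
  have a: "a \<in> Non" using tp_eq_Non[OF ab(1) _ w(1)] J by auto
  have b: "b \<in> Non" using tp_eq_Non[OF ab(2) _ w(2)] J by auto
  have bc: "tp_eq J b c" using tp_eq_trans[OF tp_eq_mono[OF ab(2) J(2)] tp_eq_sym[OF c]] .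
  have c_Non: "c \<in> Non" using tp_eq_Non[OF tp_eq_sym[OF bc] _ b] J by auto
  have abC: "brel C R a b" using ab(3) brel_Cb[OF RB] by simp
  have J': "Suc (J - 1) \<le> J" "1 \<le> J - 1" using J by auto
  obtain p where p: "p \<in> Non" "brel C R p c" "tp_eq (J - 1) p a"
    using tp_eq_parent[OF bc J' RB abC a b] by auto
  have "tp_eq (J - 1) p (w y)" using tp_eq_trans[OF p(3) tp_eq_mono[OF ab(1)]] J by auto
  moreover have "p \<in> Pset B Cs C c" using p c_Non Pset_Non RB by auto
  moreover have "(p, c) \<in> edge" using p c_Non RB unfolding edge_def by auto
  ultimately show ?thesis by blast
qed

lemma ncedge_walk_ancestor:
  assumes lo: "loose j A w" and ov: "atoms_over UBar B Cs A" and dm: "\<forall>t\<in>qvars A v0. w t \<in> dom C"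
    and f: "\<forall>x\<in>S. f x \<in> S \<and> ncedge A v0 w x (f x)"
  shows "y \<in> S \<Longrightarrow> tp_eq J c (w ((f ^^ Suc k) y)) \<Longrightarrow> k + 3 \<le> J \<Longrightarrow> J \<le> j \<Longrightarrow>
    \<exists>c'. tp_eq (J - Suc k) c' (w y) \<and> c' \<in> Pk B Cs C k c \<and> (c', c) \<in> edge\<^sup>+"
proof (induction k arbitrary: y)
  case 0
  then show ?case using ncedge_lift_parent[OF lo ov dm, of y "f y"] f by fastforce
next
  case (Suc k)
  have "(f ^^ Suc (Suc k)) y = (f ^^ Suc k) (f y)" by (simp only: funpow_Suc_right comp_def)
  then obtain c'' where c'': "tp_eq (J - Suc k) c'' (w (f y))" "c'' \<in> Pk B Cs C k c" "(c'', c) \<in> edge\<^sup>+"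
    using Suc f by fastforce
  obtain p where p: "tp_eq (J - Suc k - 1) p (w y)" "p \<in> Pset B Cs C c''" "(p, c'') \<in> edge"
    using ncedge_lift_parent[OF lo ov dm _ c''(1)] f Suc.prems by fastforce
  have "p \<in> Pk B Cs C (Suc k) c" using c''(2) p(2) by auto
  moreover have "(p, c) \<in> edge\<^sup>+" using p(3) c''(3) by (rule trancl_into_trancl2)
  ultimately show ?case using p(1) by (intro exI[of _ p]) simp
qed

text \<open>A cycle of edges between nonconstant variables can be lifted, edge by edge, to a chain
  of genuine parents in C ending in an element c' equivalent to its starting point w y. Since
  the cycle has at most m edges, c' lies in P_m(w y), has the same color, and differs from w y
  by acyclicity: this contradicts naturality.\<close>

lemma no_ncedge_cycle:
  assumes lo: "loose j A w" and ov: "atoms_over UBar B Cs A" and dm: "\<forall>t\<in>qvars A v0. w t \<in> dom C"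
    and card: "card (qvars A v0) \<le> m" and j: "m + 2 \<le> j"
    and S: "S \<subseteq> ncvars A v0 w" "S \<noteq> {}" and succ: "\<forall>x\<in>S. \<exists>y\<in>S. ncedge A v0 w x y"
  shows False
proof -
  define f where "f x = (SOME y. y \<in> S \<and> ncedge A v0 w x y)" for x
  have fS: "\<forall>x\<in>S. f x \<in> S \<and> ncedge A v0 w x (f x)"
  proof
    fix x assume "x \<in> S"
    then have "\<exists>y. y \<in> S \<and> ncedge A v0 w x y" using succ by blast
    then show "f x \<in> S \<and> ncedge A v0 w x (f x)" unfolding f_def by (rule someI_ex)
  qed
  have Sq: "S \<subseteq> qvars A v0" using S(1) unfolding ncvars_def by auto
  have finS: "finite S" using Sq finite_qvars[of A v0] by (rule finite_subset)
  obtain x where x: "x \<in> S" using S by auto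
  have it: "(f ^^ i) x \<in> S" for i by (induction i) (use x fS in auto)
  have cardS: "card S \<le> m" using card card_mono[OF finite_qvars[of A v0] Sq] by simp
  have "\<not> inj_on (\<lambda>i. (f ^^ i) x) {..card S}"
  proof
    assume "inj_on (\<lambda>i. (f ^^ i) x) {..card S}"
    then have "card {..card S} \<le> card S"
      using card_inj_on_le[of _ "{..card S}" S] it finS by auto
    then show False by auto
  qed
  then obtain a b where ab: "a < b" "b \<le> card S" "(f ^^ a) x = (f ^^ b) x"
    unfolding inj_on_def by (metis atMost_iff linorder_neq_iff)
  define y where "y = (f ^^ a) x"
  define k where "k = b - a - 1"
  have k: "Suc k \<le> m" using ab cardS unfolding k_def by auto
  have "Suc k + a = b" using ab unfolding k_def by auto
  then have "(f ^^ Suc k) y = (f ^^ b) x" unfolding y_def by (metis comp_apply funpow_add)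
  then have cycle: "(f ^^ Suc k) y = y" using ab(3) unfolding y_def by simp
  have yS: "y \<in> S" using it unfolding y_def by auto
  have wy: "w y \<in> dom C" using yS S(1) dm unfolding ncvars_def by auto
  have "tp_eq j (w y) (w ((f ^^ Suc k) y))" using cycle tp_eq_refl[OF wy] by simp
  then obtain c' where c': "tp_eq (j - Suc k) c' (w y)" "c' \<in> Pk B Cs C k (w y)" "(c', w y) \<in> edge\<^sup>+"
    using ncedge_walk_ancestor[OF lo ov dm fS yS] k j by fastforce
  have "c' \<noteq> w y" using c'(3) acyclic_edge unfolding acyclic_def by auto
  moreover have "color c' = color (w y)" using tp_eq_color[OF c'(1)] k j by auto
  ultimately show False using same_color_notin_Pk[OF wy c'(2)] k by auto
qed

lemma sink_atom_var:
  assumes "sink A v0 w s" "at \<in> set A" "s \<in> atom_vars at" "t \<in> atom_vars at"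
  shows "t = s \<or> ncedge A v0 w t s \<or> w t \<in> Con"
proof -
  have tq: "t \<in> qvars A v0" using qvars_atom assms by auto
  have s_qvars: "s \<in> ncvars A v0 w" using assms unfolding sink_def by auto
  show ?thesis
  proof (cases at)
    case (BAt R x y)
    show ?thesis
    proof (cases "t = s \<or> w t \<in> Con")
      case True then show ?thesis by auto
    next
      case False
      then have tN: "t \<in> ncvars A v0 w" using tq unfolding ncvars_def by auto
      have "(x = s \<and> y = t) \<or> (x = t \<and> y = s)" using assms(3,4) False BAt by auto
      then show ?thesis
      proof
        assume "x = s \<and> y = t"
        then have "ncedge A v0 w s t" using BAt assms(2) tN s_qvars unfolding ncedge_def by auto
        then show ?thesis using assms(1) unfolding sink_def by auto
      next
        assume "x = t \<and> y = s"
        then show ?thesis using BAt assms(2) tN s_qvars unfolding ncedge_def by auto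
      qed
    qed
  qed (use assms in auto)
qed

lemma sink_atom_holds:
  assumes lo: "loose j A w" and ov: "atoms_over UBar B Cs A" and dm: "\<forall>t\<in>qvars A v0. w t \<in> dom C"
    and j: "2 \<le> j"
    and sk: "sink A v0 w s" and at: "at \<in> set A" "s \<in> atom_vars at"
    and ts: "\<tau> s = w s" and tc: "\<And>x. x \<in> qvars A v0 \<Longrightarrow> w x \<in> Con \<Longrightarrow> \<tau> x = w x"
    and tp: "\<And>u R. ncedge A v0 w u s \<Longrightarrow> BAt R u s \<in> set A \<Longrightarrow> brel Cb R (\<tau> u) (w s)"
  shows "atom_holds Cb \<tau> at"
proof (cases at)
  case (UAt u x)
  then show ?thesis using loose_U[OF lo] at ts by auto
next
  case (EqC x c)
  then show ?thesis using loose_E[OF lo] at ts by auto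
next
  case (BAt R x y)
  have RB: "R \<in> B" using atoms_over_B[OF ov] at BAt by auto
  have xq: "x \<in> qvars A v0" "y \<in> qvars A v0" using qvars_atom[OF at(1)] BAt by auto
  have sN: "s \<in> ncvars A v0 w" using sk unfolding sink_def by auto
  have vx: "x = s \<or> ncedge A v0 w x s \<or> w x \<in> Con"
    using sink_atom_var[OF sk at, of x] BAt by auto
  have notsy: "\<not> ncedge A v0 w s y" using sk unfolding sink_def by auto
  show ?thesis
  proof (cases "x = s")
    case True
    have "w y \<in> Con"
    proof (rule ccontr)
      assume "w y \<notin> Con"
      then have "y \<in> ncvars A v0 w" using xq unfolding ncvars_def by auto
      then have "ncedge A v0 w s y" using BAt at True sN unfolding ncedge_def by auto
      then show False using notsy by auto
    qed
    then have "brel Cb R (w x) (w y)" using loose_brel_Con[OF lo j _ RB] at BAt dm xq by auto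
    then show ?thesis using True BAt ts tc[OF xq(2) \<open>w y \<in> Con\<close>] by auto
  next
    case False
    then have ys: "y = s" using BAt at(2) by auto
    from vx False show ?thesis
    proof (elim disjE)
      assume "ncedge A v0 w x s"
      then show ?thesis using tp[of x R] BAt at ys ts by auto
    next
      assume wx: "w x \<in> Con"
      then have "brel Cb R (w x) (w y)" using loose_brel_Con[OF lo j _ RB] at BAt dm xq by auto
      then show ?thesis using BAt ts tc[OF xq(1) wx] ys by auto
    qed simp
  qed
qed

end

section \<open>Reduction at a sink with parents\<close>

text \<open>Every parent variable u of the sink s has a genuine parent, parent u, of w s in C, which is
  unique and (j - 1)-equivalent to w u. The genuine parents lie in P(w s), so they are linearly
  ordered, with a lowest element. The reduced instance A_red drops the atoms of s, merges parent
  variables with the same genuine parent (collapse), and records the colors of the genuine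
  parents and their edges to the lowest one (config).\<close>

locale sink_with_parents = colored_vtdag +
  fixes A and v0 :: nat and w and j :: nat and s :: nat
  assumes inst: "loose_instance A v0 w j" and jm: "m + 3 \<le> j" and sk: "sink A v0 w s"
    and parne: "\<exists>u. ncedge A v0 w u s"
begin

lemma cardm: "card (qvars A v0) \<le> m" and ov: "atoms_over UBar B Cs A"
  and dm: "\<forall>t\<in>qvars A v0. w t \<in> dom C" and lo: "loose j A w"
  using inst unfolding loose_instance_def by auto

definition Par where "Par = {u. ncedge A v0 w u s}"

lemma s_ncvar: "s \<in> ncvars A v0 w" using sk unfolding sink_def by auto
lemma s_qvars: "s \<in> qvars A v0" using s_ncvar unfolding ncvars_def by auto
lemma w_s_Non: "w s \<in> Non" using s_ncvar dm Non_if_notin_Con unfolding ncvars_def by auto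
lemma Par_ncvars: "u \<in> Par \<Longrightarrow> u \<in> ncvars A v0 w"
  unfolding Par_def ncedge_def by auto
lemma Par_qvars: "u \<in> Par \<Longrightarrow> u \<in> qvars A v0"
  using Par_ncvars unfolding ncvars_def by auto
lemma Par_Non: "u \<in> Par \<Longrightarrow> w u \<in> Non"
  using Par_ncvars dm Non_if_notin_Con unfolding ncvars_def by auto
lemma s_notin_Par: "s \<notin> Par" using sk unfolding sink_def Par_def by auto
lemma finite_Par: "finite Par"
  using Par_qvars finite_qvars[of A v0] by (meson finite_subset subsetI)
lemma Par_nonempty: "Par \<noteq> {}" using parne unfolding Par_def by auto

lemma parent_exists:
  assumes "BAt R u s \<in> set A" "u \<in> ncvars A v0 w"
  shows "\<exists>q\<in>Non. brel C R q (w s) \<and> tp_eq (j - 1) q (w u)"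
proof -
  have RB: "R \<in> B" using atoms_over_B[OF ov assms(1)] .
  obtain a b where ab: "tp_eq j a (w u)" "tp_eq j b (w s)" "brel Cb R a b"
    using loose_B[OF lo assms(1)] by auto
  have wu: "w u \<in> Non" using assms(2) dm Non_if_notin_Con unfolding ncvars_def by auto
  have aCN: "a \<in> Non" using tp_eq_Non[OF ab(1) _ wu] jm by auto
  have bCN: "b \<in> Non" using tp_eq_Non[OF ab(2) _ w_s_Non] jm by auto
  have ar: "Suc (j - 1) \<le> j" "1 \<le> j - 1" using jm by auto
  have abC: "brel C R a b" using ab(3) brel_Cb[OF RB] by auto
  obtain q where q: "q \<in> Non" "brel C R q (w s)" "tp_eq (j - 1) q a"
    using tp_eq_parent[OF ab(2) ar RB abC aCN bCN] by auto
  then show ?thesis using tp_eq_trans[OF q(3) tp_eq_mono[OF ab(1)]] by auto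
qed

lemma parent_tp_eq:
  assumes "BAt R u s \<in> set A" "u \<in> ncvars A v0 w" "q \<in> Non" "brel C R q (w s)"
  shows "tp_eq (j - 1) q (w u)"
proof -
  obtain q' where q': "q' \<in> Non" "brel C R q' (w s)" "tp_eq (j - 1) q' (w u)"
    using parent_exists[OF assms(1,2)] by auto
  have "q = q'"
    using parent_unique[OF atoms_over_B[OF ov assms(1)] w_s_Non assms(3) q'(1) assms(4) q'(2)] .
  then show ?thesis using q' by auto
qed

definition parent where "parent u = (SOME q. q \<in> Non \<and> (\<exists>R. BAt R u s \<in> set A \<and> brel C R q (w s)))"

lemma parent_spec:
  assumes "u \<in> Par"
  shows "parent u \<in> Non" "tp_eq (j - 1) (parent u) (w u)"
    "\<And>R. BAt R u s \<in> set A \<Longrightarrow> brel C R (parent u) (w s)"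
    "parent u \<in> Pset B Cs C (w s)" "parent u \<in> dom C"
proof -
  obtain R0 where R0: "BAt R0 u s \<in> set A" using assms unfolding Par_def ncedge_def by auto
  have uN: "u \<in> ncvars A v0 w" using Par_ncvars[OF assms] .
  obtain q where "q \<in> Non" "brel C R0 q (w s)" using parent_exists[OF R0 uN] by auto
  then have ex: "\<exists>q. q \<in> Non \<and> (\<exists>R. BAt R u s \<in> set A \<and> brel C R q (w s))"
    using R0 by auto
  have h: "parent u \<in> Non \<and> (\<exists>R. BAt R u s \<in> set A \<and> brel C R (parent u) (w s))"
    unfolding parent_def by (rule someI_ex[OF ex])
  then show p1: "parent u \<in> Non" by auto
  then show p5: "parent u \<in> dom C" using Non_dom by auto
  obtain R1 where R1: "BAt R1 u s \<in> set A" "brel C R1 (parent u) (w s)" using h by auto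
  show p2: "tp_eq (j - 1) (parent u) (w u)" using parent_tp_eq[OF R1(1) uN p1 R1(2)] .
  show p4: "parent u \<in> Pset B Cs C (w s)"
    using Pset_Non[OF w_s_Non] p1 R1 atoms_over_B[OF ov R1(1)] by auto
  fix R assume R: "BAt R u s \<in> set A"
  obtain q where q: "q \<in> Non" "brel C R q (w s)" "tp_eq (j - 1) q (w u)"
    using parent_exists[OF R uN] by auto
  have "color q = color (parent u)"
    using tp_eq_color[OF tp_eq_trans[OF q(3) tp_eq_sym[OF p2]]] jm by auto
  moreover have "q \<in> Pset B Cs C (w s)"
    using Pset_Non[OF w_s_Non] q atoms_over_B[OF ov R] by auto
  ultimately have "q = parent u" using Pset_color_inj[OF w_s_Non _ p4] by auto
  then show "brel C R (parent u) (w s)" using q by auto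
qed

definition Parents where "Parents = parent ` Par"

lemma lowest_exists: "\<exists>z\<in>Parents. \<forall>q\<in>Parents. q \<in> Pset B Cs C z"
proof -
  define r where "r = {(a, b). a \<in> Parents \<and> b \<in> Parents \<and> a \<noteq> b \<and> a \<in> Pset B Cs C b}"
  have Parents_Non: "Parents \<subseteq> Non" using parent_spec unfolding Parents_def by auto
  have "r \<subseteq> edge" unfolding r_def using Pset_edge Parents_Non by auto
  then have acr: "acyclic r" using acyclic_edge acyclic_subset by auto
  have finite_Parents: "finite Parents" using finite_Par unfolding Parents_def by auto
  have "r \<subseteq> Parents \<times> Parents" unfolding r_def by auto
  then have "finite r" using finite_Parents by (meson finite_SigmaI finite_subset)
  then have wfr: "wf (r\<inverse>)" using finite_acyclic_wf_converse acr by auto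
  obtain x where x: "x \<in> Parents" using Par_nonempty unfolding Parents_def by auto
  obtain z where z: "z \<in> Parents" "\<And>y. (y, z) \<in> r\<inverse> \<Longrightarrow> y \<notin> Parents"
    using wfE_min[OF wfr x] by blast
  have "\<forall>q\<in>Parents. q \<in> Pset B Cs C z"
  proof
    fix q assume q: "q \<in> Parents"
    have qs: "q \<in> Pset B Cs C (w s)" "z \<in> Pset B Cs C (w s)"
      using q z parent_spec unfolding Parents_def by auto
    from Pset_comparable[OF w_s_Non qs] show "q \<in> Pset B Cs C z"
    proof
      assume "z \<in> Pset B Cs C q"
      then have "z = q" using z(2)[of q] q z(1) unfolding r_def by auto
      then show ?thesis using Pset_self by auto
    qed
  qed
  then show ?thesis using z by auto
qed

definition lowest where "lowest = (SOME z. z \<in> Parents \<and> (\<forall>q\<in>Parents. q \<in> Pset B Cs C z))"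
lemma lowest_spec: "lowest \<in> Parents" "\<And>q. q \<in> Parents \<Longrightarrow> q \<in> Pset B Cs C lowest"
  using someI_ex[OF lowest_exists[unfolded Bex_def]] unfolding lowest_def by auto
lemma lowest_Non: "lowest \<in> Non" using lowest_spec parent_spec unfolding Parents_def by auto

definition repr where
  "repr q = (if v0 \<in> Par \<and> parent v0 = q then v0 else (SOME u. u \<in> Par \<and> parent u = q))"
lemma repr_spec: "q \<in> Parents \<Longrightarrow> repr q \<in> Par \<and> parent (repr q) = q"
proof -
  assume q: "q \<in> Parents"
  then have ex: "\<exists>u. u \<in> Par \<and> parent u = q" unfolding Parents_def by auto
  show ?thesis unfolding repr_def using someI_ex[OF ex] by auto
qed

definition collapse where "collapse t = (if t \<in> Par then repr (parent t) else t)"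
lemma collapse_Par: "t \<in> Par \<Longrightarrow> collapse t \<in> Par \<and> parent (collapse t) = parent t"
  unfolding collapse_def using repr_spec unfolding Parents_def by auto
lemma collapse_notin_Par: "t \<notin> Par \<Longrightarrow> collapse t = t"
  unfolding collapse_def by auto
lemma collapse_v0: "collapse v0 = v0" unfolding collapse_def repr_def by auto
lemma collapse_s: "collapse s = s" using collapse_notin_Par s_notin_Par by auto
lemma collapse_qvars: "t \<in> qvars A v0 \<Longrightarrow> collapse t \<in> qvars A v0"
  using collapse_Par collapse_notin_Par Par_qvars by (cases "t \<in> Par") auto

definition low_var where "low_var = repr lowest"
lemma low_var_spec: "low_var \<in> Par" "parent low_var = lowest" "collapse low_var = low_var"
  using repr_spec[OF lowest_spec(1)] unfolding low_var_def collapse_def by auto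
lemma collapse_lowest: "t \<in> Par \<Longrightarrow> parent t = lowest \<Longrightarrow> collapse t = low_var"
  unfolding collapse_def low_var_def by auto

definition edge_label where "edge_label q = (SOME R. R \<in> B \<and> brel C R q lowest)"
lemma edge_label_spec:
  assumes "q \<in> Parents" "q \<noteq> lowest"
  shows "edge_label q \<in> B \<and> brel C (edge_label q) q lowest"
proof -
  have "q \<in> Pset B Cs C lowest" using lowest_spec assms by auto
  then have "\<exists>R. R \<in> B \<and> brel C R q lowest"
    using Pset_Non[OF lowest_Non] assms by auto
  then show ?thesis unfolding edge_label_def by (rule someI_ex)
qed

definition Par_list where "Par_list = sorted_list_of_set Par"
lemma set_Par_list: "set Par_list = Par" unfolding Par_list_def using finite_Par by auto

definition config where
  "config =
     map (\<lambda>u. BAt (edge_label (parent u)) (collapse u) low_var) (filter (\<lambda>u. parent u \<noteq> lowest) Par_list)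
     @ map (\<lambda>u. UAt (Inr (color (parent u))) (collapse u)) Par_list"
definition A_rest where "A_rest = filter (\<lambda>at. s \<notin> atom_vars at) A"
definition A_sink where "A_sink = filter (\<lambda>at. s \<in> atom_vars at) A"
definition A_red where "A_red = map (ren_atom collapse) A_rest @ config"

lemma set_config:
  "set config = (\<lambda>u. BAt (edge_label (parent u)) (collapse u) low_var) ` {u \<in> Par. parent u \<noteq> lowest}
     \<union> (\<lambda>u. UAt (Inr (color (parent u))) (collapse u)) ` Par"
  unfolding config_def using set_Par_list by auto

lemma config_cases:
  assumes "at \<in> set config"
  obtains u where "u \<in> Par" "parent u \<noteq> lowest" "at = BAt (edge_label (parent u)) (collapse u) low_var"
    | u where "u \<in> Par" "at = UAt (Inr (color (parent u))) (collapse u)"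
  using assms unfolding set_config by blast

lemma config_color:
  assumes "\<forall>at\<in>set config. atom_holds Cb \<nu> at" "u \<in> Par"
  shows "urel Cb (Inr (color (parent u))) (\<nu> (collapse u))"
proof -
  have "UAt (Inr (color (parent u))) (collapse u) \<in> set config"
    using assms(2) unfolding set_config by blast
  then show ?thesis using assms(1) by fastforce
qed

lemma config_edge:
  assumes "\<forall>at\<in>set config. atom_holds Cb \<nu> at" "u \<in> Par" "parent u \<noteq> lowest"
  shows "brel C (edge_label (parent u)) (\<nu> (collapse u)) (\<nu> low_var)"
proof -
  have "BAt (edge_label (parent u)) (collapse u) low_var \<in> set config"
    using assms(2,3) unfolding set_config by blast
  then have "brel Cb (edge_label (parent u)) (\<nu> (collapse u)) (\<nu> low_var)"
    using assms(1) by fastforce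
  then show ?thesis using edge_label_spec assms(2,3) brel_Cb unfolding Parents_def by auto
qed

lemma low_var_in_image: "low_var \<in> collapse ` Par"
  using low_var_spec by (metis imageI)

lemma config_vars: "at \<in> set config \<Longrightarrow> atom_vars at \<subseteq> collapse ` Par"
  by (cases rule: config_cases) (use low_var_in_image in auto)

lemma config_holds_parents:
  assumes "\<And>u. u \<in> Par \<Longrightarrow> \<sigma> (collapse u) = parent u" and at: "at \<in> set config"
  shows "atom_holds Cb \<sigma> at"
  using at
proof (cases rule: config_cases)
  case (1 u)
  have "\<sigma> low_var = lowest" using assms(1)[of low_var] low_var_spec by auto
  then show ?thesis using 1 assms(1) edge_label_spec brel_Cb unfolding Parents_def by auto
next
  case (2 u) then show ?thesis using assms(1) color_spec parent_spec(5) by auto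
qed

lemma config_Non:
  assumes "\<forall>at\<in>set config. atom_holds Cb \<nu> at" "u \<in> Par" "\<nu> (collapse u) \<in> dom C"
  shows "\<nu> (collapse u) \<in> Non"
proof -
  have "color (parent u) = color (\<nu> (collapse u))"
    using config_color[OF assms(1,2)] color_unique[OF assms(3)] color_spec[OF parent_spec(5)[OF assms(2)]]
    by auto
  then have "\<nu> (collapse u) \<notin> Con" using color_Non_Con[OF parent_spec(1)[OF assms(2)]] by auto
  then show ?thesis using assms(3) Non_if_notin_Con by auto
qed

text \<open>A value for the lowest parent determines the values of all the collapsed parents in an
  assignment satisfying config, since an element of C has at most one R-parent for each R.\<close>

lemma config_unique:
  assumes g1: "\<forall>at\<in>set config. atom_holds Cb g1 at" and g2: "\<forall>at\<in>set config. atom_holds Cb g2 at"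
    and low: "g1 low_var = g2 low_var"
    and dom: "\<And>u. u \<in> Par \<Longrightarrow> g1 (collapse u) \<in> dom C \<and> g2 (collapse u) \<in> dom C"
    and u: "u \<in> Par"
  shows "g1 (collapse u) = g2 (collapse u)"
proof (cases "parent u = lowest")
  case True then show ?thesis using collapse_lowest u low by auto
next
  case False
  have "g1 low_var \<in> Non"
    using config_Non[OF g1 low_var_spec(1)] dom[OF low_var_spec(1)] low_var_spec by auto
  moreover have "g1 (collapse u) \<in> Non" "g2 (collapse u) \<in> Non" using config_Non g1 g2 dom u by auto
  moreover have "brel C (edge_label (parent u)) (g1 (collapse u)) (g1 low_var)"
      "brel C (edge_label (parent u)) (g2 (collapse u)) (g1 low_var)"
    using config_edge[OF g1 u False] config_edge[OF g2 u False] low by auto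
  moreover have "edge_label (parent u) \<in> B"
    using edge_label_spec False u unfolding Parents_def by auto
  ultimately show ?thesis using parent_unique by blast
qed

lemma A_rest_vars: "at \<in> set A_rest \<Longrightarrow> atom_vars at \<subseteq> qvars A v0 - {s}"
  unfolding A_rest_def using qvars_atom by fastforce
lemma A_rest_subset: "set A_rest \<subseteq> set A" unfolding A_rest_def by auto
lemma A_sink_mem: "at \<in> set A \<Longrightarrow> s \<in> atom_vars at \<Longrightarrow> at \<in> set A_sink"
  unfolding A_sink_def by auto
lemma A_sink_subset: "set A_sink \<subseteq> set A" unfolding A_sink_def by auto
lemma A_rest_mem: "at \<in> set A \<Longrightarrow> s \<notin> atom_vars at \<Longrightarrow> at \<in> set A_rest"
  unfolding A_rest_def by auto
lemma Par_subset: "Par \<subseteq> qvars A v0 - {s}" using Par_qvars s_notin_Par by auto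
lemma set_A_red: "set A_red = ren_atom collapse ` set A_rest \<union> set config"
  unfolding A_red_def by auto

lemma qvars_A_red: "qvars A_red a \<subseteq> insert a (collapse ` (qvars A v0 - {s}))"
proof
  fix t assume "t \<in> qvars A_red a"
  then consider "t = a" | at where "at \<in> set A_red" "t \<in> atom_vars at" unfolding qvars_def by auto
  then show "t \<in> insert a (collapse ` (qvars A v0 - {s}))"
  proof cases
    case 2
    then consider at0 where "at0 \<in> set A_rest" "at = ren_atom collapse at0" | "at \<in> set config"
      using set_A_red by auto
    then show ?thesis
    proof cases
      case 1 then show ?thesis using 2 A_rest_vars by (auto simp: atom_vars_ren)
    next
      case 2
      then have "t \<in> collapse ` Par"
        using config_vars \<open>t \<in> atom_vars at\<close> by auto
      then show ?thesis using Par_subset by auto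
    qed
  qed auto
qed

lemma card_qvars_A_red:
  assumes "a \<in> collapse ` (qvars A v0 - {s})"
  shows "card (qvars A_red a) < card (qvars A v0)"
proof -
  have "qvars A_red a \<subseteq> collapse ` (qvars A v0 - {s})" using qvars_A_red assms by auto
  moreover have "finite (collapse ` (qvars A v0 - {s}))"
    by (intro finite_imageI finite_Diff finite_qvars)
  ultimately have "card (qvars A_red a) \<le> card (collapse ` (qvars A v0 - {s}))"
    by (intro card_mono)
  also have "\<dots> \<le> card (qvars A v0 - {s})"
    by (rule card_image_le) (use finite_qvars in auto)
  also have "\<dots> < card (qvars A v0)" using s_qvars finite_qvars by (meson card_Diff1_less)
  finally show ?thesis .
qed

lemma atoms_over_A_red: "atoms_over UBar B Cs A_red"
  unfolding atoms_over_def
proof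
  fix at assume "at \<in> set A_red"
  then consider at0 where "at0 \<in> set A_rest" "at = ren_atom collapse at0" | "at \<in> set config"
    using set_A_red by auto
  then show "atom_over UBar B Cs at"
  proof cases
    case 1 then show ?thesis
      using ov A_rest_subset unfolding atoms_over_def by (auto simp: atom_over_ren)
  next
    case 2
    then show ?thesis
    proof (cases rule: config_cases)
      case (1 u) then show ?thesis using edge_label_spec unfolding Parents_def by auto
    next
      case (2 u) then show ?thesis using color_spec parent_spec(5) unfolding UBar_def by auto
    qed
  qed
qed

lemma collapse_in_qvars_A_red:
  assumes "t \<in> qvars A v0" "t \<noteq> s" "t \<noteq> v0" "w t \<notin> Con"
  shows "collapse t \<in> qvars A_red a"
proof -
  obtain at where at: "at \<in> set A" "t \<in> atom_vars at"
    using assms(1,3) unfolding qvars_def by auto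
  show ?thesis
  proof (cases "s \<in> atom_vars at")
    case False
    then have "ren_atom collapse at \<in> set A_red" using A_rest_mem[OF at(1)] set_A_red by auto
    moreover have "collapse t \<in> atom_vars (ren_atom collapse at)"
      using at(2) by (auto simp: atom_vars_ren)
    ultimately show ?thesis by (rule qvars_atom)
  next
    case True
    have "ncedge A v0 w t s" using sink_atom_var[OF sk at(1) True at(2)] assms by auto
    then have "t \<in> Par" unfolding Par_def by auto
    then have "UAt (Inr (color (parent t))) (collapse t) \<in> set A_red"
      using set_A_red set_config by auto
    then show ?thesis unfolding qvars_def by force
  qed
qed

definition w_red where "w_red t = (if t \<in> Par then parent t else w t)"

context fixes w' assumes W1: "\<And>t. t \<in> Par \<Longrightarrow> tp_eq (j - 1) (w' (collapse t)) (parent t)"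
    and W2: "\<And>t. t \<in> qvars A v0 \<Longrightarrow> t \<noteq> s \<Longrightarrow> t \<notin> Par \<Longrightarrow> w' t = w t"
begin

lemma collapse_tp_eq:
  assumes "t \<in> qvars A v0" "t \<noteq> s"
  shows "tp_eq (j - 1) (w' (collapse t)) (w t)"
proof (cases "t \<in> Par")
  case True then show ?thesis using tp_eq_trans[OF W1 parent_spec(2)] by auto
next
  case False then show ?thesis using collapse_notin_Par W2 assms tp_eq_refl dm by auto
qed

lemma collapse_dom: "t \<in> collapse ` (qvars A v0 - {s}) \<Longrightarrow> w' t \<in> dom C"
  using collapse_tp_eq tp_eq_dom by blast

lemma loose_A_red: "loose (j - 1) A_red w'"
  unfolding loose_def
proof
  fix at assume "at \<in> set A_red"
  then consider at0 where "at0 \<in> set A_rest" "at = ren_atom collapse at0" | "at \<in> set config"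
    using set_A_red by auto
  then show "case at of UAt u x \<Rightarrow> urel Cb u (w' x) | EqC x c \<Rightarrow> w' x = cval Cb c
    | BAt R x y \<Rightarrow> \<exists>a b. tp_eq (j - 1) a (w' x) \<and> tp_eq (j - 1) b (w' y) \<and> brel Cb R a b"
  proof cases
    case 1
    have at0A: "at0 \<in> set A" using 1 A_rest_subset by auto
    have vs: "atom_vars at0 \<subseteq> qvars A v0 - {s}" using A_rest_vars 1 by auto
    show ?thesis
    proof (cases at0)
      case (UAt u x)
      have "urel Cb u (w x)" using loose_U[OF lo] at0A UAt by auto
      moreover have "tp_eq (j - 1) (w x) (w' (collapse x))"
        using tp_eq_sym[OF collapse_tp_eq] vs UAt by auto
      moreover have "u \<in> UBar" using atoms_over_U[OF ov] at0A UAt by auto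
      ultimately have "urel Cb u (w' (collapse x))" using tp_le_urel[OF tp_eq_imp_le] jm by auto
      then show ?thesis using 1 UAt by auto
    next
      case (EqC x c)
      have wx: "w x = cval Cb c" using loose_E[OF lo] at0A EqC by auto
      have cC: "c \<in> Cs" using atoms_over_E[OF ov] at0A EqC by auto
      then have "w x \<in> Con" using wx cval_Cb unfolding Ccon_def by auto
      then have "x \<notin> Par" using Par_ncvars unfolding ncvars_def by auto
      moreover have "x \<in> qvars A v0" "x \<noteq> s" using vs EqC by auto
      ultimately have "w' (collapse x) = w x" using collapse_notin_Par W2 by auto
      then show ?thesis using 1 EqC wx by auto
    next
      case (BAt R x y)
      obtain a b where ab: "tp_eq j a (w x)" "tp_eq j b (w y)" "brel Cb R a b"
        using loose_B[OF lo] at0A BAt by blast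
      have "tp_eq (j - 1) a (w' (collapse x))"
        using tp_eq_trans[OF tp_eq_mono[OF ab(1)] tp_eq_sym[OF collapse_tp_eq]] vs BAt by auto
      moreover have "tp_eq (j - 1) b (w' (collapse y))"
        using tp_eq_trans[OF tp_eq_mono[OF ab(2)] tp_eq_sym[OF collapse_tp_eq]] vs BAt by auto
      ultimately show ?thesis using 1 BAt ab(3) by auto
    qed
  next
    case 2
    then show ?thesis
    proof (cases rule: config_cases)
      case (1 u)
      have "tp_eq (j - 1) (parent u) (w' (collapse u))" using tp_eq_sym[OF W1[OF 1(1)]] .
      moreover have "tp_eq (j - 1) lowest (w' low_var)"
        using tp_eq_sym[OF W1[OF low_var_spec(1)]] low_var_spec by auto
      moreover have "brel Cb (edge_label (parent u)) (parent u) lowest"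
        using edge_label_spec 1 brel_Cb unfolding Parents_def by auto
      ultimately show ?thesis using 1 by auto
    next
      case (2 u)
      have e: "tp_eq (j - 1) (w' (collapse u)) (parent u)" using W1 2 by auto
      then have ce: "color (w' (collapse u)) = color (parent u)" using tp_eq_color jm by auto
      have "urel Cb (Inr (color (w' (collapse u)))) (w' (collapse u))"
        using color_spec tp_eq_dom[OF e] by auto
      then show ?thesis using 2 ce by auto
    qed
  qed
qed

lemma solution_A_rest_atoms:
  assumes G1: "\<forall>at\<in>set A_red. atom_holds Cb g'' at"
    and G3: "\<forall>t\<in>qvars A_red a. tp_le Oo (w' t) (g'' t)" and O: "1 \<le> Oo"
    and g: "\<And>t. g t = (if t = s then z else if w t \<in> Con then w t else g'' (collapse t))"
  shows "\<forall>at\<in>set A_rest. atom_holds Cb g at"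
proof
  have constv: "g'' t = w t" if tt: "t \<in> qvars A_red a" "t \<in> qvars A v0" "t \<noteq> s" "w t \<in> Con" for t
  proof -
    have tP: "t \<notin> Par" using tt Par_ncvars unfolding ncvars_def by auto
    have "w' t = w t" using W2 tt tP by auto
    then have l: "tp_le Oo (w t) (g'' t)" using G3 tt by auto
    obtain c where c: "c \<in> Cs" "w t = cval C c" using tt(4) unfolding Ccon_def by auto
    show ?thesis using tp_le_const[OF l O c] by auto
  qed
  fix at assume at: "at \<in> set A_rest"
  have "ren_atom collapse at \<in> set A_red" using set_A_red at by auto
  then have h: "atom_holds Cb (g'' \<circ> collapse) at"
    using G1 by (auto simp: atom_holds_ren[symmetric])
  have "atom_holds Cb g at = atom_holds Cb (g'' \<circ> collapse) at"
  proof (rule atom_holds_cong)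
    fix t assume t: "t \<in> atom_vars at"
    then have tq: "t \<in> qvars A v0" "t \<noteq> s" using A_rest_vars at by auto
    have "collapse t \<in> atom_vars (ren_atom collapse at)" using t by (auto simp: atom_vars_ren)
    then have rq: "collapse t \<in> qvars A_red a"
      using qvars_atom[OF \<open>ren_atom collapse at \<in> set A_red\<close>] by auto
    show "g t = (g'' \<circ> collapse) t"
    proof (cases "w t \<in> Con")
      case True
      then have "collapse t = t" using collapse_notin_Par Par_ncvars unfolding ncvars_def by auto
      then show ?thesis using constv[of t] rq tq True g by auto
    next
      case False then show ?thesis using g tq by auto
    qed
  qed
  then show "atom_holds Cb g at" using h by auto
qed

lemma solution_A_rest_vars:
  assumes G2: "\<forall>t\<in>qvars A_red a. g'' t \<in> dom C"
    and G3: "\<forall>t\<in>qvars A_red a. tp_le Oo (w' t) (g'' t)" and O: "Ob \<le> Oo" "Ob \<le> j - 1"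
    and anc: "v0 \<noteq> s \<Longrightarrow> collapse v0 \<in> qvars A_red a"
    and g: "\<And>t. g t = (if t = s then z else if w t \<in> Con then w t else g'' (collapse t))"
  shows "\<forall>t\<in>qvars A v0 - {s}. g t \<in> dom C \<and> tp_le Ob (w t) (g t)"
proof
  fix t assume t: "t \<in> qvars A v0 - {s}"
  show "g t \<in> dom C \<and> tp_le Ob (w t) (g t)"
  proof (cases "w t \<in> Con")
    case True then show ?thesis using g t dm tp_le_refl by auto
  next
    case False
    have rq: "collapse t \<in> qvars A_red a"
    proof (cases "t = v0")
      case True then show ?thesis using anc t by auto
    next
      case False then show ?thesis using collapse_in_qvars_A_red t \<open>w t \<notin> Con\<close> by auto
    qed
    have gt: "g t = g'' (collapse t)" using g t False by auto
    have l1: "tp_le Ob (w t) (w' (collapse t))"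
      using tp_le_mono[OF tp_eq_imp_le[OF tp_eq_sym[OF collapse_tp_eq]]] t O by auto
    have l2: "tp_le Ob (w' (collapse t)) (g'' (collapse t))"
      using tp_le_mono[OF G3[rule_format, OF rq] O(1)] .
    show ?thesis using tp_le_trans[OF l1 l2] gt G2 rq by auto
  qed
qed

end

lemma w_red_parent: "t \<in> Par \<Longrightarrow> tp_eq (j - 1) (w_red (collapse t)) (parent t)"
  using collapse_Par[of t] parent_spec(5) tp_eq_refl unfolding w_red_def by auto
lemma w_red_other: "t \<in> qvars A v0 \<Longrightarrow> t \<noteq> s \<Longrightarrow> t \<notin> Par \<Longrightarrow> w_red t = w t"
  unfolding w_red_def by auto

definition w_red_root where "w_red_root t = (if t = v0 then w v0 else w_red t)"
lemma w_red_root_parent: "t \<in> Par \<Longrightarrow> tp_eq (j - 1) (w_red_root (collapse t)) (parent t)"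
proof -
  assume t: "t \<in> Par"
  show ?thesis
  proof (cases "collapse t = v0")
    case True
    then have "v0 \<in> Par" "parent v0 = parent t" using collapse_Par[OF t] by auto
    then show ?thesis
      using True tp_eq_sym[OF parent_spec(2)[of v0]] unfolding w_red_root_def by auto
  next
    case False then show ?thesis using w_red_parent[OF t] unfolding w_red_root_def by auto
  qed
qed
lemma w_red_root_other: "t \<in> qvars A v0 \<Longrightarrow> t \<noteq> s \<Longrightarrow> t \<notin> Par \<Longrightarrow> w_red_root t = w t"
  unfolding w_red_root_def w_red_def by auto

lemma config_subset_A_red: "set config \<subseteq> set A_red" using set_A_red by auto

lemma collapse_Par_qvars_A_red: "u \<in> Par \<Longrightarrow> collapse u \<in> qvars A_red a"
proof -
  assume u: "u \<in> Par"
  then have "UAt (Inr (color (parent u))) (collapse u) \<in> set A_red"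
    using set_A_red set_config by auto
  then show ?thesis using qvars_atom[of _ A_red "collapse u" a] by auto
qed

lemma low_var_qvars_A_red: "low_var \<in> qvars A_red a"
  using collapse_Par_qvars_A_red[OF low_var_spec(1)] low_var_spec by auto

lemma solution_collapse_parent:
  assumes S: "solution Oo A_red low_var w_red g''" and u: "u \<in> Par"
  shows "g'' (collapse u) = parent u"
proof -
  have "g'' (collapse u) = w_red (collapse u)"
  proof (rule config_unique)
    show "\<forall>at\<in>set config. atom_holds Cb g'' at"
      using S config_subset_A_red unfolding solution_def by auto
    show "\<forall>at\<in>set config. atom_holds Cb w_red at"
      using config_holds_parents[of w_red] collapse_Par by (auto simp: w_red_def)
    show "g'' low_var = w_red low_var" using S unfolding solution_def by auto
    fix u' assume "u' \<in> Par"
    then show "g'' (collapse u') \<in> dom C \<and> w_red (collapse u') \<in> dom C"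
      using S collapse_Par_qvars_A_red collapse_Par parent_spec(5) unfolding w_red_def solution_def by auto
  qed (rule u)
  then show ?thesis using collapse_Par[OF u] unfolding w_red_def by auto
qed

lemma solution_parented_root:
  assumes sv: "s = v0" and Ob: "1 \<le> Ob" "Ob \<le> j - 1" "Ob \<le> Oo"
    and S: "solution Oo A_red low_var w_red g''"
  shows "\<exists>g. solution Ob A v0 w g"
proof -
  have G1: "\<forall>at\<in>set A_red. atom_holds Cb g'' at" and G2: "\<forall>t\<in>qvars A_red low_var. g'' t \<in> dom C"
    and G3: "\<forall>t\<in>qvars A_red low_var. tp_le Oo (w_red t) (g'' t)"
    using S unfolding solution_def by auto
  have Oo1: "1 \<le> Oo" using Ob by auto
  define g where "g t = (if t = s then w s else if w t \<in> Con then w t else g'' (collapse t))" for t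
  have anc: "v0 \<noteq> s \<Longrightarrow> collapse v0 \<in> qvars A_red low_var" using sv by auto
  note rest = solution_A_rest_atoms[of w_red, OF w_red_parent w_red_other G1 G3 Oo1 g_def]
    solution_A_rest_vars[of w_red, OF w_red_parent w_red_other G2 G3 Ob(3) Ob(2) anc g_def]
  have pu: "g'' (collapse u) = parent u" if "u \<in> Par" for u
    using solution_collapse_parent[OF S] that .
  have atoms: "\<forall>at\<in>set A. atom_holds Cb g at"
  proof
    fix at assume at: "at \<in> set A"
    show "atom_holds Cb g at"
    proof (cases "s \<in> atom_vars at")
      case False then show ?thesis using rest(1) A_rest_mem at by auto
    next
      case True
      show ?thesis
      proof (rule sink_atom_holds[OF lo ov dm _ sk at True])
        show "2 \<le> j" using jm by auto
        show "g s = w s" unfolding g_def by auto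
        fix x assume "x \<in> qvars A v0" "w x \<in> Con" then show "g x = w x" unfolding g_def by auto
      next
        fix u R assume ge: "ncedge A v0 w u s" and b: "BAt R u s \<in> set A"
        have u: "u \<in> Par" using ge unfolding Par_def by auto
        have "g u = parent u"
          using pu[OF u] u s_notin_Par Par_Non[OF u] unfolding g_def Cnon_def by auto
        then show "brel Cb R (g u) (w s)"
          using parent_spec(3)[OF u b] brel_Cb atoms_over_B[OF ov b] by auto
      qed
    qed
  qed
  have "solution Ob A v0 w g" unfolding solution_def
  proof (intro conjI ballI)
    fix t assume t: "t \<in> qvars A v0"
    show "g t \<in> dom C" using rest(2) t dm s_qvars unfolding g_def by (cases "t = s") auto
    show "tp_le Ob (w t) (g t)"
      using rest(2) t dm tp_le_refl unfolding g_def by (cases "t = s") auto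
  next
    show "g v0 = w v0" using sv unfolding g_def by auto
  qed (use atoms in auto)
  then show ?thesis by auto
qed

text \<open>If the sink is not the root, its value has to be re-chosen next to the new values of its
  parents. The lowest parent carries the whole situation: it has the other parents as
  ancestors with the right colors and edge labels, and a child of the type of w s in the
  right relation to them. This is expressed by a query rooted at the lowest parent whose
  variables for the child's type are shifted beyond those of A.\<close>

definition fresh :: nat where
  "fresh = Suc (Max (qvars A v0))"

definition child_var :: "nat \<Rightarrow> nat" where
  "child_var t = (if t = 0 then s else t + fresh)"

definition Con_vars :: "nat set" where
  "Con_vars = {x \<in> qvars A v0. w x \<in> Con}"

definition const_of :: "nat \<Rightarrow> 'c" where
  "const_of x = (SOME c. c \<in> Cs \<and> w x = cval C c)"

definition child_atoms where
  "child_atoms Th = config @ map (ren_atom collapse) A_sink @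
     map (\<lambda>x. EqC x (const_of x)) (sorted_list_of_set Con_vars) @ map (ren_atom child_var) Th"

lemma less_fresh:
  assumes "t \<in> qvars A v0"
  shows "t < fresh"
  using Max_ge[OF finite_qvars assms] unfolding fresh_def by simp

lemma const_of: "x \<in> Con_vars \<Longrightarrow> const_of x \<in> Cs \<and> w x = cval C (const_of x)"
  unfolding const_of_def Con_vars_def Ccon_def by (rule someI_ex) auto

lemma Con_vars_not_Par: "x \<in> Con_vars \<Longrightarrow> x \<in> qvars A v0 \<and> x \<notin> Par \<and> x \<noteq> s"
  using Par_ncvars w_s_Non unfolding Con_vars_def ncvars_def Cnon_def by auto

lemma set_child_atoms:
  "set (child_atoms Th) = set config \<union> ren_atom collapse ` set A_sink \<union>
     (\<lambda>x. EqC x (const_of x)) ` Con_vars \<union> ren_atom child_var ` set Th"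
proof -
  have "finite Con_vars" unfolding Con_vars_def using finite_qvars[of A v0] by auto
  then show ?thesis unfolding child_atoms_def by auto
qed

lemma child_atoms_cases:
  assumes "at \<in> set (child_atoms Th)"
  obtains "at \<in> set config"
    | at0 where "at0 \<in> set A_sink" "at = ren_atom collapse at0"
    | x where "x \<in> Con_vars" "at = EqC x (const_of x)"
    | at0 where "at0 \<in> set Th" "at = ren_atom child_var at0"
  using assms unfolding set_child_atoms by blast

lemma qvars_child_atoms: "qvars (child_atoms Th) low_var \<subseteq> qvars A v0 \<union> child_var ` qvars Th 0"
proof
  fix t assume "t \<in> qvars (child_atoms Th) low_var"
  then consider "t = low_var" | at where "at \<in> set (child_atoms Th)" "t \<in> atom_vars at"
    unfolding qvars_def by auto
  then show "t \<in> qvars A v0 \<union> child_var ` qvars Th 0"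
  proof cases
    case 1 then show ?thesis using low_var_spec Par_qvars by auto
  next
    case 2
    from 2(1) show ?thesis
    proof (cases rule: child_atoms_cases)
      case 1 then show ?thesis using config_vars 2(2) collapse_Par Par_qvars by fastforce
    next
      case (2 at0)
      then obtain t0 where "t0 \<in> atom_vars at0" "t = collapse t0"
        using \<open>t \<in> atom_vars at\<close> by (auto simp: atom_vars_ren)
      then show ?thesis using collapse_qvars qvars_atom[of at0 A t0 v0] A_sink_subset 2 by auto
    next
      case 3 then show ?thesis using \<open>t \<in> atom_vars at\<close> Con_vars_not_Par by auto
    next
      case (4 at0)
      then obtain t0 where "t0 \<in> atom_vars at0" "t = child_var t0"
        using \<open>t \<in> atom_vars at\<close> by (auto simp: atom_vars_ren)
      then show ?thesis using qvars_atom[of at0 Th t0 0] 4 by auto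
    qed
  qed
qed

lemma card_qvars_child_atoms: "card (qvars (child_atoms Th) low_var) \<le> m + card (qvars Th 0)"
proof -
  have "card (qvars (child_atoms Th) low_var) \<le> card (qvars A v0 \<union> child_var ` qvars Th 0)"
    by (rule card_mono[OF _ qvars_child_atoms]) (use finite_qvars in auto)
  also have "\<dots> \<le> card (qvars A v0) + card (child_var ` qvars Th 0)" by (rule card_Un_le)
  also have "\<dots> \<le> m + card (qvars Th 0)"
    using cardm card_image_le[OF finite_qvars] by (intro add_mono)
  finally show ?thesis .
qed

lemma atoms_over_child_atoms:
  assumes "atoms_over UBar B Cs Th"
  shows "atoms_over UBar B Cs (child_atoms Th)"
  unfolding atoms_over_def
proof
  fix at assume "at \<in> set (child_atoms Th)"
  then show "atom_over UBar B Cs at"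
  proof (cases rule: child_atoms_cases)
    case 1 then show ?thesis
      using atoms_over_A_red config_subset_A_red unfolding atoms_over_def by auto
  next
    case 2 then show ?thesis
      using ov A_sink_subset unfolding atoms_over_def by (auto simp: atom_over_ren)
  next
    case 3 then show ?thesis using const_of by auto
  next
    case 4 then show ?thesis using assms unfolding atoms_over_def by (auto simp: atom_over_ren)
  qed
qed

lemma sat_child_atoms_lowest:
  assumes "sat Cb Th 0 (w s)"
  shows "sat Cb (child_atoms Th) low_var lowest"
proof -
  obtain \<theta> where \<theta>: "\<theta> 0 = w s" "\<forall>t\<in>qvars Th 0. \<theta> t \<in> dom Cb" "\<forall>at\<in>set Th. atom_holds Cb \<theta> at"
    using assms unfolding sat_def by auto
  define \<sigma> where "\<sigma> t = (if fresh \<le> t then \<theta> (t - fresh)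
      else if t = s then w s else if t \<in> Par then parent t else w t)" for t
  have \<sigma>_qvars: "\<sigma> t = (if t = s then w s else if t \<in> Par then parent t else w t)"
    if "t \<in> qvars A v0" for t
    using less_fresh[OF that] unfolding \<sigma>_def by auto
  have \<sigma>_child: "\<sigma> (child_var t) = \<theta> t" for t
    using \<theta>(1) less_fresh[OF s_qvars] unfolding \<sigma>_def child_var_def by auto
  have \<sigma>_Par: "\<sigma> (collapse u) = parent u" if "u \<in> Par" for u
    using \<sigma>_qvars[of "collapse u"] collapse_Par[OF that] Par_qvars s_notin_Par by auto
  have "\<sigma> t \<in> dom Cb" if "t \<in> qvars (child_atoms Th) low_var" for t
  proof -
    from qvars_child_atoms that
    consider "t \<in> qvars A v0" | t0 where "t0 \<in> qvars Th 0" "t = child_var t0" by blast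
    then show ?thesis
    proof cases
      case 1 then show ?thesis using \<sigma>_qvars dm parent_spec(5) by auto
    next
      case 2 then show ?thesis using \<sigma>_child \<theta>(2) by simp
    qed
  qed
  moreover have "atom_holds Cb \<sigma> at" if "at \<in> set (child_atoms Th)" for at
    using that
  proof (cases rule: child_atoms_cases)
    case 1 then show ?thesis using config_holds_parents[of \<sigma>] \<sigma>_Par by auto
  next
    case (2 at0)
    have at0: "at0 \<in> set A" "s \<in> atom_vars at0" using 2 unfolding A_sink_def by auto
    have "atom_holds Cb (\<sigma> \<circ> collapse) at0"
    proof (rule sink_atom_holds[OF lo ov dm _ sk at0])
      show "2 \<le> j" using jm by auto
      show "(\<sigma> \<circ> collapse) s = w s" using collapse_s \<sigma>_qvars[OF s_qvars] by auto
    next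
      fix x assume x: "x \<in> qvars A v0" "w x \<in> Con"
      then have "x \<notin> Par" "x \<noteq> s"
        using Par_ncvars w_s_Non unfolding ncvars_def Cnon_def by auto
      then show "(\<sigma> \<circ> collapse) x = w x"
        using collapse_notin_Par \<sigma>_qvars[OF x(1)] by auto
    next
      fix u R assume u: "ncedge A v0 w u s" and b: "BAt R u s \<in> set A"
      then have "u \<in> Par" unfolding Par_def by auto
      then show "brel Cb R ((\<sigma> \<circ> collapse) u) (w s)"
        using \<sigma>_Par parent_spec(3) b brel_Cb atoms_over_B[OF ov b] by auto
    qed
    then show ?thesis using 2 by (auto simp: atom_holds_ren)
  next
    case (3 x)
    then have "\<sigma> x = w x" using Con_vars_not_Par \<sigma>_qvars by auto
    then show ?thesis using 3 const_of[OF 3(1)] cval_Cb by auto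
  next
    case (4 at0)
    have "atom_holds Cb (\<sigma> \<circ> child_var) at0 = atom_holds Cb \<theta> at0"
      by (rule atom_holds_cong) (simp add: \<sigma>_child)
    then show ?thesis using 4 \<theta>(3) by (auto simp: atom_holds_ren)
  qed
  moreover have "\<sigma> low_var = lowest"
    using \<sigma>_Par[OF low_var_spec(1)] low_var_spec by auto
  ultimately show ?thesis unfolding sat_def by blast
qed

lemma collapse_Par_qvars_child_atoms:
  assumes "u \<in> Par"
  shows "collapse u \<in> qvars (child_atoms Th) low_var"
proof -
  have "UAt (Inr (color (parent u))) (collapse u) \<in> set (child_atoms Th)"
    using assms unfolding set_child_atoms set_config by blast
  then show ?thesis using qvars_atom[of _ "child_atoms Th" "collapse u" low_var] by simp
qed

context
  fixes \<nu> Th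
  assumes \<nu>_dom: "\<forall>t\<in>qvars (child_atoms Th) low_var. \<nu> t \<in> dom C"
    and \<nu>_holds: "\<forall>at\<in>set (child_atoms Th). atom_holds Cb \<nu> at"
begin

lemma s_qvars_child_atoms: "s \<in> qvars (child_atoms Th) low_var"
proof -
  obtain u R where "BAt R u s \<in> set A" using parne unfolding ncedge_def by auto
  then have "BAt R u s \<in> set A_sink" using A_sink_mem by simp
  then have "ren_atom collapse (BAt R u s) \<in> set (child_atoms Th)"
    unfolding set_child_atoms by blast
  then show ?thesis using qvars_atom[of _ "child_atoms Th" s low_var] collapse_s by auto
qed

lemma child_atoms_child_type: "sat Cb Th 0 (\<nu> s)"
proof -
  have "qvars (map (ren_atom child_var) Th) s \<subseteq> qvars (child_atoms Th) low_var"
    using s_qvars_child_atoms unfolding qvars_def set_child_atoms by auto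
  then have "sat Cb (map (ren_atom child_var) Th) s (\<nu> s)"
    unfolding sat_def using \<nu>_dom \<nu>_holds set_child_atoms by (intro exI[of _ \<nu>]) auto
  then show ?thesis by (rule sat_ren) (simp add: child_var_def)
qed

lemma child_atoms_collapse_eq:
  assumes g: "\<forall>at\<in>set config. atom_holds Cb g at" and low: "\<nu> low_var = g low_var"
    and g_dom: "\<And>u. u \<in> Par \<Longrightarrow> g (collapse u) \<in> dom C" and u: "u \<in> Par"
  shows "\<nu> (collapse u) = g (collapse u)"
proof (rule config_unique[of \<nu> g])
  show "\<forall>at\<in>set config. atom_holds Cb \<nu> at" using \<nu>_holds unfolding set_child_atoms by auto
  show "\<nu> (collapse u') \<in> dom C \<and> g (collapse u') \<in> dom C" if "u' \<in> Par" for u'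
    using \<nu>_dom g_dom[OF that] collapse_Par_qvars_child_atoms[OF that] by blast
qed (use g low u in simp_all)

lemma child_atoms_Con_vars:
  assumes x: "x \<in> Con_vars"
  shows "\<nu> x = w x"
proof -
  have "EqC x (const_of x) \<in> set (child_atoms Th)" using x unfolding set_child_atoms by blast
  then have "\<nu> x = cval Cb (const_of x)" using \<nu>_holds by force
  then show ?thesis using const_of[OF x] cval_Cb by auto
qed

lemma child_atoms_sink_atom:
  assumes g_s: "g s = \<nu> s" and g_Par: "\<And>u. u \<in> Par \<Longrightarrow> g u = \<nu> (collapse u)"
    and g_Con: "\<And>x. x \<in> Con_vars \<Longrightarrow> g x = w x"
    and at: "at \<in> set A" "s \<in> atom_vars at"
  shows "atom_holds Cb g at"
proof -
  have "ren_atom collapse at \<in> set (child_atoms Th)"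
    using A_sink_mem[OF at] unfolding set_child_atoms by blast
  then have "atom_holds Cb (\<nu> \<circ> collapse) at"
    using \<nu>_holds by (auto simp: atom_holds_ren[symmetric])
  moreover have "atom_holds Cb g at = atom_holds Cb (\<nu> \<circ> collapse) at"
  proof (rule atom_holds_cong)
    fix t assume t: "t \<in> atom_vars at"
    from sink_atom_var[OF sk at t] consider "t = s" | "ncedge A v0 w t s" | "w t \<in> Con" by auto
    then show "g t = (\<nu> \<circ> collapse) t"
    proof cases
      case 1 then show ?thesis using collapse_s g_s by auto
    next
      case 2 then show ?thesis using g_Par unfolding Par_def by auto
    next
      case 3
      then have "t \<in> Con_vars" using qvars_atom[OF at(1) t] unfolding Con_vars_def by auto
      then show ?thesis using g_Con child_atoms_Con_vars Con_vars_not_Par collapse_notin_Par by auto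
    qed
  qed
  ultimately show ?thesis by simp
qed

end

lemma solution_parented_sink:
  assumes sv: "s \<noteq> v0" and Ob: "1 \<le> Ob" and Oj: "Ob + m + type_size Ob \<le> j - 1"
    and S: "solution (Ob + m + type_size Ob) A_red v0 w_red_root g''"
  shows "\<exists>g. solution Ob A v0 w g"
proof -
  define Oo where "Oo = Ob + m + type_size Ob"
  have G1: "\<forall>at\<in>set A_red. atom_holds Cb g'' at" and G2: "\<forall>t\<in>qvars A_red v0. g'' t \<in> dom C"
    and G0: "g'' v0 = w_red_root v0" and G3: "\<forall>t\<in>qvars A_red v0. tp_le Oo (w_red_root t) (g'' t)"
    using S unfolding solution_def Oo_def by auto
  have Oo: "1 \<le> Oo" "Ob \<le> Oo" "Ob \<le> j - 1" "Oo \<le> j - 1"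
    using Ob Oj unfolding Oo_def by auto
  obtain Th where Th: "atoms_over UBar B Cs Th" "card (qvars Th 0) \<le> type_size Ob" "sat Cb Th 0 (w s)"
    "\<And>y. y \<in> dom C \<Longrightarrow> sat Cb Th 0 y \<Longrightarrow> tp_le Ob (w s) y"
    using type_query[OF _ Ob] dm s_qvars by blast
  have card: "card (qvars (child_atoms Th) low_var) \<le> Oo"
    using card_qvars_child_atoms[of Th] Th(2) unfolding Oo_def by auto
  have "tp_eq (j - 1) (w_red_root low_var) lowest"
    using w_red_root_parent[OF low_var_spec(1)] low_var_spec by auto
  then have "tp_le Oo lowest (w_red_root low_var)"
    using tp_eq_imp_le[OF tp_eq_mono[OF tp_eq_sym Oo(4)]] by blast
  moreover have "tp_le Oo (w_red_root low_var) (g'' low_var)" using G3 low_var_qvars_A_red by auto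
  ultimately have "sat Cb (child_atoms Th) low_var (g'' low_var)"
    using tp_le_sat[OF tp_le_trans atoms_over_child_atoms[OF Th(1)] card sat_child_atoms_lowest[OF Th(3)]]
    by blast
  then obtain \<nu> where \<nu>: "\<nu> low_var = g'' low_var" "\<forall>t\<in>qvars (child_atoms Th) low_var. \<nu> t \<in> dom C"
      "\<forall>at\<in>set (child_atoms Th). atom_holds Cb \<nu> at"
    unfolding sat_def by auto
  have \<nu>_Par: "\<nu> (collapse u) = g'' (collapse u)" if u: "u \<in> Par" for u
  proof (rule child_atoms_collapse_eq[where \<nu> = \<nu> and g = g'', OF \<nu>(2,3) _ \<nu>(1) _ u])
    show "\<forall>at\<in>set config. atom_holds Cb g'' at" using G1 config_subset_A_red by blast
    show "g'' (collapse u') \<in> dom C" if "u' \<in> Par" for u'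
      using G2 collapse_Par_qvars_A_red[OF that] by blast
  qed
  define g where "g t = (if t = s then \<nu> s else if w t \<in> Con then w t else g'' (collapse t))" for t
  have anc: "v0 \<noteq> s \<Longrightarrow> collapse v0 \<in> qvars A_red v0"
    using collapse_v0 root_in_qvars by simp
  note rest = solution_A_rest_atoms[of w_red_root, OF w_red_root_parent w_red_root_other G1 G3 Oo(1) g_def]
    solution_A_rest_vars[of w_red_root, OF w_red_root_parent w_red_root_other G2 G3 Oo(2,3) anc g_def]
  have atoms: "atom_holds Cb g at" if at: "at \<in> set A" for at
  proof (cases "s \<in> atom_vars at")
    case False then show ?thesis using rest(1) A_rest_mem at by auto
  next
    case True
    show ?thesis
    proof (rule child_atoms_sink_atom[OF \<nu>(2,3) _ _ _ at True])
      show "g s = \<nu> s" unfolding g_def by simp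
      show "g u = \<nu> (collapse u)" if "u \<in> Par" for u
      proof -
        have "u \<noteq> s" "w u \<notin> Con"
          using that s_notin_Par Par_Non unfolding Cnon_def by auto
        then show ?thesis using \<nu>_Par[OF that] unfolding g_def by simp
      qed
      show "g x = w x" if "x \<in> Con_vars" for x
      proof -
        have "x \<noteq> s" using Con_vars_not_Par[OF that] by simp
        moreover have "w x \<in> Con" using that by (simp add: Con_vars_def)
        ultimately show ?thesis by (simp add: g_def)
      qed
    qed
  qed
  have s_dom: "\<nu> s \<in> dom C" using \<nu>(2) s_qvars_child_atoms[OF \<nu>(2,3)] by blast
  have s_le: "tp_le Ob (w s) (\<nu> s)"
    using Th(4) child_atoms_child_type[OF \<nu>(2,3)] s_dom by blast
  have "solution Ob A v0 w g" unfolding solution_def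
  proof (intro conjI ballI)
    fix t assume t: "t \<in> qvars A v0"
    show "g t \<in> dom C" using rest(2) t s_dom unfolding g_def by (cases "t = s") auto
    show "tp_le Ob (w t) (g t)" using rest(2) t s_le unfolding g_def by (cases "t = s") auto
  next
    show "g v0 = w v0" using sv G0 collapse_v0 unfolding g_def w_red_root_def by auto
  qed (use atoms in auto)
  then show ?thesis by auto
qed

lemma loose_instance_reduced:
  assumes "s \<noteq> v0"
  shows "card (qvars A_red v0) < card (qvars A v0)" "loose_instance A_red v0 w_red_root (j - 1)"
proof -
  have v0: "v0 \<in> collapse ` (qvars A v0 - {s})"
    using collapse_v0 assms root_in_qvars by (metis DiffI image_eqI singletonD)
  show less: "card (qvars A_red v0) < card (qvars A v0)" using card_qvars_A_red[OF v0] .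
  have "\<forall>t\<in>qvars A_red v0. w_red_root t \<in> dom C"
    using qvars_A_red v0 collapse_dom[OF w_red_root_parent w_red_root_other] by blast
  then show "loose_instance A_red v0 w_red_root (j - 1)" unfolding loose_instance_def
    using less cardm atoms_over_A_red loose_A_red[OF w_red_root_parent w_red_root_other] by auto
qed

lemma loose_instance_reduced_at_low_var:
  assumes "s = v0"
  shows "card (qvars A_red low_var) < card (qvars A v0)" "loose_instance A_red low_var w_red (j - 1)"
proof -
  have low: "low_var \<in> collapse ` (qvars A v0 - {s})"
    using low_var_spec Par_subset by (metis image_eqI subsetD)
  show less: "card (qvars A_red low_var) < card (qvars A v0)" using card_qvars_A_red[OF low] .
  have "\<forall>t\<in>qvars A_red low_var. w_red t \<in> dom C"
    using qvars_A_red low collapse_dom[OF w_red_parent w_red_other] by blast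
  then show "loose_instance A_red low_var w_red (j - 1)" unfolding loose_instance_def
    using less cardm atoms_over_A_red loose_A_red[OF w_red_parent w_red_other] by auto
qed

end

section \<open>Repairing loose assignments\<close>

context colored_vtdag
begin

lemma solution_no_ncedge:
  assumes inst: "loose_instance A v0 w j" and j: "2 \<le> j" and ne: "\<not> (\<exists>x y. ncedge A v0 w x y)"
  shows "solution Ob A v0 w w"
proof -
  have lo: "loose j A w" and ov: "atoms_over UBar B Cs A" and dm: "\<forall>t\<in>qvars A v0. w t \<in> dom C"
    using inst unfolding loose_instance_def by auto
  have "\<forall>at\<in>set A. atom_holds Cb w at"
  proof
    fix at assume at: "at \<in> set A"
    show "atom_holds Cb w at"
    proof (cases at)
      case (UAt u x) then show ?thesis using loose_U[OF lo] at by auto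
    next
      case (EqC x c) then show ?thesis using loose_E[OF lo] at by auto
    next
      case (BAt R x y)
      have q: "x \<in> qvars A v0" "y \<in> qvars A v0" using qvars_atom[OF at] BAt by auto
      have "w x \<in> Con \<or> w y \<in> Con"
        using ne BAt at q unfolding ncedge_def ncvars_def by auto
      then show ?thesis using loose_brel_Con[OF lo j _ atoms_over_B[OF ov]] at BAt dm q by auto
    qed
  qed
  then show ?thesis unfolding solution_def using dm tp_le_refl by auto
qed

lemma sink_with_parent_exists:
  assumes inst: "loose_instance A v0 w j" and j: "m + 2 \<le> j" and e: "ncedge A v0 w x y"
  shows "\<exists>s. sink A v0 w s \<and> (\<exists>u. ncedge A v0 w u s)"
proof (rule ccontr)
  assume no_sink: "\<not> ?thesis"
  define S where "S = {z \<in> ncvars A v0 w. \<not> sink A v0 w z}"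
  have "\<exists>y\<in>S. ncedge A v0 w z y" if z: "z \<in> S" for z
  proof -
    obtain y where y: "ncedge A v0 w z y" using z unfolding S_def sink_def by auto
    then have "y \<in> ncvars A v0 w" "\<not> sink A v0 w y"
      using no_sink unfolding ncedge_def by auto
    then show ?thesis using y unfolding S_def by auto
  qed
  moreover have "x \<in> S" using e unfolding S_def sink_def ncedge_def by auto
  ultimately show False
    using no_ncedge_cycle[of j A w v0 S] inst j unfolding loose_instance_def S_def by auto
qed

text \<open>The level needed for loose instances with at most d variables to have solutions at level Ob:
  each reduction loses one level, and re-attaching a sink that is not the root needs its
  parents at level Ob + m + type_size Ob.\<close>

fun depth_bound :: "nat \<Rightarrow> nat \<Rightarrow> nat" where
  "depth_bound 0 Ob = Ob + m + 3"
| "depth_bound (Suc d) Ob = depth_bound d (Ob + m + type_size Ob) + Ob + m + type_size Ob + m + 3"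

lemma depth_bound_ge: "Ob + m + 3 \<le> depth_bound d Ob"
  by (cases d) auto

lemma loose_instance_solution:
  "card (qvars A v0) \<le> d \<Longrightarrow> loose_instance A v0 w j \<Longrightarrow> depth_bound d Ob \<le> j \<Longrightarrow> 1 \<le> Ob \<Longrightarrow>
     \<exists>g. solution Ob A v0 w g"
proof (induction d arbitrary: A v0 w j Ob)
  case 0
  then show ?case using finite_qvars root_in_qvars by (metis card_0_eq empty_iff le_zero_eq)
next
  case (Suc d)
  define Oo where "Oo = Ob + m + type_size Ob"
  have j: "depth_bound d Oo \<le> j - 1" "Oo \<le> j - 1" "m + 3 \<le> j" "Ob \<le> j - 1"
    using Suc.prems(3) depth_bound_ge[of Oo d] unfolding Oo_def by auto
  have IH: "\<exists>g. solution Oo A' v0' w' g"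
    if "card (qvars A' v0') < card (qvars A v0)" "loose_instance A' v0' w' (j - 1)" for A' v0' w'
    using Suc.IH that Suc.prems(1,4) j(1) unfolding Oo_def by auto
  show ?case
  proof (cases "\<exists>x y. ncedge A v0 w x y")
    case False
    then show ?thesis using solution_no_ncedge[OF Suc.prems(2)] j by auto
  next
    case True
    then obtain x y where "ncedge A v0 w x y" by blast
    then obtain s where s: "sink A v0 w s" "\<exists>u. ncedge A v0 w u s"
      using sink_with_parent_exists[OF Suc.prems(2)] j(3) by fastforce
    interpret sink_with_parents U B Cs C K Cb m A v0 w j s
      using Suc.prems(2) j(3) s by unfold_locales
    show ?thesis
    proof (cases "s = v0")
      case True
      obtain g'' where "solution Oo A_red low_var w_red g''"
        using IH[OF loose_instance_reduced_at_low_var[OF True]] by blast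
      moreover have "Ob \<le> Oo" unfolding Oo_def by simp
      ultimately show ?thesis using solution_parented_root[OF True Suc.prems(4) j(4)] by blast
    next
      case False
      obtain g'' where "solution Oo A_red v0 w_red_root g''"
        using IH[OF loose_instance_reduced[OF False]] by blast
      then show ?thesis
        using solution_parented_sink[OF False Suc.prems(4)] j(2) unfolding Oo_def by blast
    qed
  qed
qed

end

section \<open>The quotient structure\<close>

context colored_vtdag
begin

abbreviation cls :: "nat \<Rightarrow> 'e \<Rightarrow> 'e set" where
  "cls n \<equiv> qn U B Cs K n Cb"

lemma qn_tp_eq: "y \<in> dom C \<Longrightarrow> x \<in> cls n y \<Longrightarrow> tp_eq n x y"
  unfolding qn_def tp_eq_def by auto

lemma qn_self: "y \<in> dom C \<Longrightarrow> y \<in> cls n y"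
  unfolding qn_def by auto

lemma lift_cq_scoped:
  "cq_over U B Cs \<Phi> \<Longrightarrow> \<forall>a\<in>set (snd (lift_cq \<Phi>)). atom_vars a \<subseteq> {0..fst (lift_cq \<Phi>)}"
  unfolding cq_over_def lift_cq_def by (auto simp: atom_vars_map_atom)

lemma holds_quot_of_holds:
  assumes "cq_over U B Cs \<Phi>" "e \<in> dom C" "holds C \<Phi> e"
  shows "holds (quot U B Cs K n Cb) (lift_cq \<Phi>) (cls n e)"
proof -
  have "holds Cb (lift_cq \<Phi>) e"
    using holds_lift_cq_iff[OF is_coloring assms(1)] assms(3) by simp
  then show ?thesis by (rule holds_quot[OF _ _ lift_cq_scoped[OF assms(1)]]) (simp add: assms(2))
qed

lemma loose_of_holds_quot:
  assumes \<Phi>: "cq_over U B Cs \<Phi>" and e: "e \<in> dom C" and n: "1 \<le> n"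
    and h: "holds (quot U B Cs K n Cb) (lift_cq \<Phi>) (cls n e)"
  obtains w where "w 0 = e" "\<forall>i\<le>fst \<Phi>. w i \<in> dom C" "loose n (snd (lift_cq \<Phi>)) w"
proof -
  let ?Q = "quot U B Cs K n Cb"
  obtain V where V: "V 0 = cls n e" "\<forall>i\<in>{1..fst \<Phi>}. V i \<in> dom ?Q"
      "\<forall>at\<in>set (snd \<Phi>). atom_holds ?Q V (map_atom Inl id id at)"
    using h unfolding holds_def lift_cq_def by auto
  define w where "w i = (if i = 0 then e else SOME x. x \<in> dom C \<and> V i = cls n x)" for i
  have w: "w i \<in> dom C \<and> V i = cls n (w i)" if "i \<le> fst \<Phi>" for i
  proof (cases "i = 0")
    case True then show ?thesis using e V unfolding w_def by auto
  next
    case False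
    then have "V i \<in> dom ?Q" using V(2) that by auto
    then have "\<exists>x. x \<in> dom C \<and> V i = cls n x" unfolding quot_def by auto
    then show ?thesis
      unfolding w_def using False someI_ex[of "\<lambda>x. x \<in> dom C \<and> V i = cls n x"] by simp
  qed
  have "loose n (snd (lift_cq \<Phi>)) w" unfolding loose_def lift_cq_def
  proof (simp, intro ballI)
    fix at assume at: "at \<in> set (snd \<Phi>)"
    have ok: "atom_over U B Cs at" "atom_vars at \<subseteq> {0..fst \<Phi>}"
      using \<Phi> at unfolding cq_over_def by auto
    have h: "atom_holds ?Q V (map_atom Inl id id at)" using V at by auto
    show "case map_atom Inl id id at of UAt u x \<Rightarrow> urel Cb u (w x) | EqC x c \<Rightarrow> w x = cval Cb c
        | BAt R x y \<Rightarrow> \<exists>a b. tp_eq n a (w x) \<and> tp_eq n b (w y) \<and> brel Cb R a b"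
    proof (cases at)
      case (UAt u x)
      have wx: "w x \<in> dom C" "V x = cls n (w x)" using w ok UAt by auto
      obtain y where y: "y \<in> cls n (w x)" "urel Cb (Inl u) y"
        using h UAt wx unfolding quot_def by auto
      have "urel Cb (Inl u) (w x)"
        using tp_le_urel[OF tp_eq_imp_le[OF qn_tp_eq[OF wx(1) y(1)]] n _ y(2)] ok UAt
        unfolding UBar_def by auto
      then show ?thesis using UAt by auto
    next
      case (BAt R x y)
      have wx: "w x \<in> dom C" "V x = cls n (w x)" "w y \<in> dom C" "V y = cls n (w y)"
        using w ok BAt by auto
      obtain a b where ab: "a \<in> cls n (w x)" "b \<in> cls n (w y)" "brel Cb R a b"
        using h BAt wx unfolding quot_def by auto
      show ?thesis using BAt qn_tp_eq[OF wx(1) ab(1)] qn_tp_eq[OF wx(3) ab(2)] ab(3) by auto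
    next
      case (EqC x c)
      have wx: "w x \<in> dom C" "V x = cls n (w x)" and c: "c \<in> Cs" using w ok EqC by auto
      have "cls n (w x) = cls n (cval Cb c)" using h EqC wx unfolding quot_def by auto
      then have "w x \<in> cls n (cval C c)" using qn_self[OF wx(1)] cval_Cb[OF c] by auto
      then have "tp_eq n (w x) (cval C c)" using qn_tp_eq cval_dom[OF c] by auto
      then have "w x = cval C c" using tp_eq_Con n c unfolding Ccon_def by auto
      then show ?thesis using EqC cval_Cb[OF c] by auto
    qed
  qed
  moreover have "w 0 = e" unfolding w_def by simp
  ultimately show thesis using that w by blast
qed

lemma holds_of_solution:
  assumes g: "solution Ob (snd Q) 0 w g" and scoped: "\<forall>a\<in>set (snd Q). atom_vars a \<subseteq> {0..fst Q}"
    and e: "w 0 \<in> dom C"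
  shows "holds Cb Q (w 0)"
proof -
  define v where "v i = (if i \<in> qvars (snd Q) 0 then g i else w 0)" for i
  have "atom_holds Cb v a" if "a \<in> set (snd Q)" for a
  proof -
    have "atom_holds Cb v a = atom_holds Cb g a"
      using qvars_atom[OF that] by (intro atom_holds_cong) (auto simp: v_def)
    then show ?thesis using g that unfolding solution_def by auto
  qed
  moreover have "v i \<in> dom C" for i using g e unfolding v_def solution_def by auto
  moreover have "v 0 = w 0" using g root_in_qvars unfolding v_def solution_def by auto
  ultimately show ?thesis unfolding holds_def by auto
qed

lemma holds_of_holds_quot:
  assumes \<Phi>: "cq_over U B Cs \<Phi>" "fst \<Phi> < m" and e: "e \<in> dom C"
    and h: "holds (quot U B Cs K (depth_bound m 1) Cb) (lift_cq \<Phi>) (cls (depth_bound m 1) e)"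
  shows "holds C \<Phi> e"
proof -
  let ?n = "depth_bound m 1" and ?D = "snd (lift_cq \<Phi>)"
  obtain w where w: "w 0 = e" "\<forall>i\<le>fst \<Phi>. w i \<in> dom C" "loose ?n ?D w"
    using loose_of_holds_quot[OF \<Phi>(1) e _ h] depth_bound_ge[of 1 m] by auto
  have vars: "qvars ?D 0 \<subseteq> {0..fst \<Phi>}"
    using lift_cq_scoped[OF \<Phi>(1)] unfolding qvars_def lift_cq_def by auto
  then have card: "card (qvars ?D 0) \<le> m"
    using \<Phi>(2) card_mono[OF finite_atLeastAtMost vars] by simp
  have "atom_over UBar B Cs (map_atom Inl id id a)" if "a \<in> set (snd \<Phi>)" for a
  proof -
    have "atom_over U B Cs a" using \<Phi>(1) that unfolding cq_over_def by blast
    then show ?thesis unfolding UBar_def by (cases a) auto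
  qed
  then have "atoms_over UBar B Cs ?D" unfolding atoms_over_def lift_cq_def by auto
  then have "loose_instance ?D 0 w ?n" unfolding loose_instance_def using card vars w by auto
  then obtain g where "solution 1 ?D 0 w g" using loose_instance_solution card by blast
  then have "holds Cb (lift_cq \<Phi>) e"
    using holds_of_solution[of 1 "lift_cq \<Phi>"] lift_cq_scoped[OF \<Phi>(1)] w e by auto
  then show ?thesis using holds_lift_cq_iff[OF is_coloring \<Phi>(1)] by simp
qed

end

theorem lemma9:
  fixes U :: "'u set" and B :: "'b set" and Cs :: "'c set"
    and C :: "('e,'u,'b,'c) struc"
    and K :: "(nat \<times> nat) set" and Cb :: "('e,'u + nat \<times> nat,'b,'c) struc"
    and m :: nat
  assumes "vtdag U B Cs C"
    and "natural_coloring U B Cs C K Cb m"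
  shows "\<forall>\<Phi>. cq_over U B Cs \<Phi> \<and> fst \<Phi> < m \<longrightarrow>
           (\<exists>n. \<forall>e\<in>dom C.
              holds (quot U B Cs K n Cb) (lift_cq \<Phi>) (qn U B Cs K n Cb e) \<longleftrightarrow> holds C \<Phi> e)"
proof (intro allI impI)
  interpret colored_vtdag U B Cs C K Cb m using assms by unfold_locales
  fix \<Phi> :: "('u, 'b, 'c) cq"
  assume \<Phi>: "cq_over U B Cs \<Phi> \<and> fst \<Phi> < m"
  show "\<exists>n. \<forall>e\<in>dom C. holds (quot U B Cs K n Cb) (lift_cq \<Phi>) (cls n e) \<longleftrightarrow> holds C \<Phi> e"
    using holds_quot_of_holds holds_of_holds_quot \<Phi> by blast
qed

end
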